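(* Let $G$ be a stochastic game with generalized-reachability objective $\mathcal T$ of dimension $n$. If $s\in S_\Box$ is a Maximizer state, then $\mathsf{exit}[\mathfrak A](\{s\})=\mathfrak A(s)$.
   Context: Stochastic game $G=(S,S_\Box,S_\circ,s_0,A,\mathrm{Av},\delta)$: finite state set $S$ partitioned into Maximizer states $S_\Box$ and Minimizer states $S_\circ$, initial state $s_0$, finite action set $A$, nonempty $\mathrm{Av}(s)$, transition distributions $\delta(s,a)$. Strategies history-dependent randomized; $\mathbb P^{\sigma,\tau}_s$ measure on infinite paths from $s$. Objective $\mathcal T=(T_1,\dots,T_n)$, $T_i\subseteq S$; $\mathfrak A(s)$ = set of $\vec v\in\mathbb R^n_{\ge0}$ such that some Maximizer strategy $\sigma$ gives $\mathbb P^{\sigma,\tau}_s(\Diamond T_i)\ge\vec v_i$ for all Minimizer strategies $\tau$ and all $i$. Geometry: $\mathit{dwc}(X)=\{y\in\mathbb R^n_{\ge0}\mid\exists x\in X:y\le x\}$; $\mathbf 1=\mathit{dwc}(\{\vec1\})$; $c\cdot X=\{cx\mid x\in X\}$; $X+Y$ Minkowski sum; $\mathrm{conv}$ convex hull. For $f:S\to2^{\mathbb R^n}$ and $a\in\mathrm{Av}(s)$: $f(s,a):=\big(\mathit{dwc}(\{\mathbb 1_{\mathcal T}(s)\})+\sum_{s'}\delta(s,a)(s')\cdot f(s')\big)\cap\mathbf 1$ where $\mathbb 1_{\mathcal T}(s)_i=1$ iff $s\in T_i$. $(s,a)$ exits $T\subseteq S$ if some successor $s'$ with $\delta(s,a)(s')>0$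 lies outside $T$; $\mathsf{Exits}(T)$ is the set of such pairs with $s\in T$, $a\in\mathrm{Av}(s)$. Best exit: $\mathsf{exit}[f](T):=\big(\mathit{dwc}(\{\sum_{s\in T}\mathbb 1_{\mathcal T}(s)\})+\mathrm{conv}(\bigcup_{(s,a)\in\mathsf{Exits}(T),\,s\in S_\Box}f(s,a))\big)\cap\mathbf 1$, with $\bigcup_\emptyset=\{\vec 0\}$. *)

theory Defs
  imports "HOL-Analysis.Analysis" "HOL-Probability.Probability"
begin

record ('s, 'a) sgame =
  states :: "'s set"
  max_states :: "'s set"
  min_states :: "'s set"
  init :: 's
  actions :: "'a set"
  avail :: "'s \<Rightarrow> 'a set"
  trans :: "'s \<Rightarrow> 'a \<Rightarrow> 's pmf"

definition wf_game :: "('s, 'a) sgame \<Rightarrow> bool" where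
  "wf_game G \<longleftrightarrow>
     finite (states G) \<and> finite (actions G) \<and>
     max_states G \<union> min_states G = states G \<and>
     max_states G \<inter> min_states G = {} \<and>
     init G \<in> states G \<and>
     (\<forall>s\<in>states G. avail G s \<noteq> {} \<and> avail G s \<subseteq> actions G \<and>
        (\<forall>a\<in>avail G s. set_pmf (trans G s a) \<subseteq> states G))"

text \<open>A history is a list of past (state, chosen action) pairs together with the current state.
  Strategies are history-dependent and randomized.\<close>

type_synonym ('s, 'a) strategy = "('s \<times> 'a) list \<Rightarrow> 's \<Rightarrow> 'a pmf"

definition max_strategy :: "('s, 'a) sgame \<Rightarrow> ('s, 'a) strategy \<Rightarrow> bool" where
  "max_strategy G \<sigma> \<longleftrightarrow> (\<forall>h s. s \<in> max_states G \<longrightarrow> set_pmf (\<sigma> h s) \<subseteq> avail G s)"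

definition min_strategy :: "('s, 'a) sgame \<Rightarrow> ('s, 'a) strategy \<Rightarrow> bool" where
  "min_strategy G \<tau> \<longleftrightarrow> (\<forall>h s. s \<in> min_states G \<longrightarrow> set_pmf (\<tau> h s) \<subseteq> avail G s)"

fun reach_within :: "('s, 'a) sgame \<Rightarrow> ('s, 'a) strategy \<Rightarrow> ('s, 'a) strategy \<Rightarrow> 's set
      \<Rightarrow> nat \<Rightarrow> ('s \<times> 'a) list \<Rightarrow> 's \<Rightarrow> real" where
  "reach_within G \<sigma> \<tau> T 0 h s = (if s \<in> T then 1 else 0)"
| "reach_within G \<sigma> \<tau> T (Suc k) h s =
     (if s \<in> T then 1 else
        measure_pmf.expectation (if s \<in> max_states G then \<sigma> h s else \<tau> h s)
          (\<lambda>a. measure_pmf.expectation (trans G s a)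
                 (\<lambda>s'. reach_within G \<sigma> \<tau> T k (h @ [(s, a)]) s')))"

text \<open>P^{\<sigma>,\<tau>}_s(\<diamond>T): by continuity of measures, the limit (supremum) of the
  probabilities of reaching T within k steps.\<close>

definition prob_reach :: "('s, 'a) sgame \<Rightarrow> ('s, 'a) strategy \<Rightarrow> ('s, 'a) strategy \<Rightarrow> 's set
      \<Rightarrow> 's \<Rightarrow> real" where
  "prob_reach G \<sigma> \<tau> T s = (SUP k. reach_within G \<sigma> \<tau> T k [] s)"

definition nonneg_vec :: "real ^ 'n \<Rightarrow> bool" where
  "nonneg_vec v \<longleftrightarrow> (\<forall>i. 0 \<le> v $ i)"

definition achievable :: "('s, 'a) sgame \<Rightarrow> ('n \<Rightarrow> 's set) \<Rightarrow> 's \<Rightarrow> (real ^ 'n) set" where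
  "achievable G T s = {v. nonneg_vec v \<and>
     (\<exists>\<sigma>. max_strategy G \<sigma> \<and>
        (\<forall>\<tau>. min_strategy G \<tau> \<longrightarrow> (\<forall>i. prob_reach G \<sigma> \<tau> (T i) s \<ge> v $ i)))}"

definition dwc :: "(real ^ 'n) set \<Rightarrow> (real ^ 'n) set" where
  "dwc X = {y. nonneg_vec y \<and> (\<exists>x\<in>X. \<forall>i. y $ i \<le> x $ i)}"

definition unit_box :: "(real ^ 'n) set" where
  "unit_box = dwc {vec 1}"

definition msum :: "(real ^ 'n) set \<Rightarrow> (real ^ 'n) set \<Rightarrow> (real ^ 'n) set" where
  "msum X Y = {x + y | x y. x \<in> X \<and> y \<in> Y}"

definition sscale :: "real \<Rightarrow> (real ^ 'n) set \<Rightarrow> (real ^ 'n) set" where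
  "sscale c X = (\<lambda>x. c *\<^sub>R x) ` X"

definition msum_over :: "('b \<Rightarrow> (real ^ 'n) set) \<Rightarrow> 'b set \<Rightarrow> (real ^ 'n) set" where
  "msum_over F I = Finite_Set.fold (\<lambda>i Acc. msum (F i) Acc) {0} I"

definition ind_vec :: "('n \<Rightarrow> 's set) \<Rightarrow> 's \<Rightarrow> real ^ 'n" where
  "ind_vec T s = (\<chi> i. if s \<in> T i then 1 else 0)"

definition act_set :: "('s, 'a) sgame \<Rightarrow> ('n \<Rightarrow> 's set) \<Rightarrow> ('s \<Rightarrow> (real ^ 'n) set)
      \<Rightarrow> 's \<Rightarrow> 'a \<Rightarrow> (real ^ 'n) set" where
  "act_set G T f s a =
     msum (dwc {ind_vec T s})
          (msum_over (\<lambda>s'. sscale (pmf (trans G s a) s') (f s')) (states G)) \<inter> unit_box"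

definition exits :: "('s, 'a) sgame \<Rightarrow> 's set \<Rightarrow> ('s \<times> 'a) set" where
  "exits G U = {(s, a). s \<in> U \<and> a \<in> avail G s \<and>
                  (\<exists>s'. pmf (trans G s a) s' > 0 \<and> s' \<notin> U)}"

definition best_exit :: "('s, 'a) sgame \<Rightarrow> ('n \<Rightarrow> 's set) \<Rightarrow> ('s \<Rightarrow> (real ^ 'n) set)
      \<Rightarrow> 's set \<Rightarrow> (real ^ 'n) set" where
  "best_exit G T f U =
     (let E = {(s, a) \<in> exits G U. s \<in> max_states G};
          Y = (if E = {} then {0} else (\<Union>(s, a)\<in>E. act_set G T f s a))
      in msum (dwc {\<Sum>s\<in>U. ind_vec T s}) (convex hull Y) \<inter> unit_box)"

end

theory Submission
  imports Defs
begin

(*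
  Every point of the best exit of {s} is achievable from s: a point of f(s,a) is achieved by
  playing a first and then, from each successor, a strategy achieving the chosen point there;
  convex combinations are achieved by the behavioural mixture of two strategies (Kuhn's theorem);
  and the coordinates whose target contains s are met surely anyway.

  Conversely, let a strategy sigma achieve v from s. While the play stays in s, sigma can only
  use actions that surely loop back to s, so a play either loops forever or leaves after a finite
  sequence of loops through an exit action b. What the continuation of sigma guarantees after such
  an exit is a point of f(s,b). In every coordinate whose target avoids s, v is bounded by the
  countable convex combination of these points weighted by the probabilities of the exits, looping
  forever contributing 0; scaling the combination down coordinatewise gives v exactly there. In
  finite dimension a countable convex combination of points of a convex set lies in the set.
*)

section \<open>Minkowski sums and down-closures\<close>

lemma msum_left_commute: "msum X (msum Y Z) = msum Y (msum X Z)"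
  unfolding msum_def by (auto simp: add.left_commute) (metis add.left_commute)+

lemma msum_over_insert:
  assumes "finite I" "i \<notin> I"
  shows "msum_over F (insert i I) = msum (F i) (msum_over F I)"
proof -
  have "comp_fun_commute_on UNIV (\<lambda>i Acc. msum (F i) Acc)"
    unfolding comp_fun_commute_on_def by (auto simp: fun_eq_iff msum_left_commute)
  then show ?thesis
    unfolding msum_over_def using assms by (simp add: comp_fun_commute_on.fold_insert)
qed

lemma msum_over_eq:
  assumes "finite I"
  shows "msum_over F I = {\<Sum>i\<in>I. f i | f. \<forall>i\<in>I. f i \<in> F i}"
  using assms
proof (induction I rule: finite_induct)
  case empty
  then show ?case by (simp add: msum_over_def)
next
  case (insert i I)
  show ?case
  proof (intro set_eqI iffI)
    fix x assume "x \<in> msum_over F (insert i I)"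
    then obtain y f where "y \<in> F i" "\<forall>j\<in>I. f j \<in> F j" "x = y + (\<Sum>j\<in>I. f j)"
      unfolding msum_over_insert[OF insert(1,2)] insert(3) msum_def by auto
    moreover have "(\<Sum>j\<in>I. f j) = (\<Sum>j\<in>I. (f(i := y)) j)"
      using insert(2) by (intro sum.cong) auto
    ultimately show "x \<in> {\<Sum>i\<in>insert i I. f i | f. \<forall>i\<in>insert i I. f i \<in> F i}"
      using insert(1,2) by (intro CollectI exI[of _ "f(i := y)"]) auto
  next
    fix x assume "x \<in> {\<Sum>i\<in>insert i I. f i | f. \<forall>i\<in>insert i I. f i \<in> F i}"
    then obtain f where "\<forall>j\<in>insert i I. f j \<in> F j" "x = f i + (\<Sum>j\<in>I. f j)"
      using insert(1,2) by auto
    then show "x \<in> msum_over F (insert i I)"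
      unfolding msum_over_insert[OF insert(1,2)] insert(3) msum_def by blast
  qed
qed

lemma dwc_singleton: "dwc {x} = {y. nonneg_vec y \<and> (\<forall>i. y $ i \<le> x $ i)}"
  unfolding dwc_def by auto

lemma zero_mem_dwc_singleton: "nonneg_vec x \<Longrightarrow> 0 \<in> dwc {x}"
  unfolding dwc_singleton nonneg_vec_def by auto

lemma mem_unit_box_iff: "x \<in> unit_box \<longleftrightarrow> (\<forall>i. 0 \<le> x $ i \<and> x $ i \<le> 1)"
  unfolding unit_box_def dwc_singleton nonneg_vec_def by auto

lemma mem_dwc_ind_vec_iff:
  "d \<in> dwc {ind_vec T t} \<longleftrightarrow> (\<forall>i. 0 \<le> d $ i \<and> d $ i \<le> (if t \<in> T i then 1 else 0))"
  unfolding dwc_singleton nonneg_vec_def ind_vec_def by auto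

section \<open>Countable convex combinations\<close>

lemma normalized_weighted_sum_mem_convex:
  fixes c :: "'j \<Rightarrow> 'v::real_vector"
  assumes "finite A" "convex D" "\<And>j. j \<in> A \<Longrightarrow> 0 \<le> w j"
    and "\<And>j. j \<in> A \<Longrightarrow> 0 < w j \<Longrightarrow> c j \<in> D" and "0 < (\<Sum>j\<in>A. w j)"
  shows "(1 / (\<Sum>j\<in>A. w j)) *\<^sub>R (\<Sum>j\<in>A. w j *\<^sub>R c j) \<in> D"
proof -
  let ?A = "{j\<in>A. 0 < w j}"
  let ?s = "\<Sum>j\<in>A. w j"
  have on_support: "(\<Sum>j\<in>A. f j) = (\<Sum>j\<in>?A. f j)" if "\<And>j. j \<in> A \<Longrightarrow> w j = 0 \<Longrightarrow> f j = 0"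
    for f :: "'j \<Rightarrow> 'b::comm_monoid_add"
    using assms(1,3) that by (intro sum.mono_neutral_right) (auto simp: order.strict_iff_order)
  have "(\<Sum>j\<in>?A. (w j / ?s) *\<^sub>R c j) \<in> D"
  proof (rule convex_sum)
    show "(\<Sum>j\<in>?A. w j / ?s) = 1"
      using assms(5) on_support[of w] by (simp flip: sum_divide_distrib)
  qed (use assms in auto)
  moreover have "(\<Sum>j\<in>?A. (w j / ?s) *\<^sub>R c j) = (1 / ?s) *\<^sub>R (\<Sum>j\<in>A. w j *\<^sub>R c j)"
    by (subst on_support[of "\<lambda>j. w j *\<^sub>R c j"]) (auto simp: scaleR_sum_right)
  ultimately show ?thesis by metis
qed

lemma normalized_weighted_sum_limit_mem_closure:
  fixes c :: "'j \<Rightarrow> 'v::real_normed_vector"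
  assumes "convex D" "\<And>K. finite (A K)" "\<And>K j. j \<in> A K \<Longrightarrow> 0 \<le> w K j"
    and "\<And>K j. j \<in> A K \<Longrightarrow> 0 < w K j \<Longrightarrow> c j \<in> D"
    and "(\<lambda>K. \<Sum>j\<in>A K. w K j) \<longlonglongrightarrow> s" "0 < s"
    and "(\<lambda>K. \<Sum>j\<in>A K. w K j *\<^sub>R c j) \<longlonglongrightarrow> V"
  shows "(1 / s) *\<^sub>R V \<in> closure D"
proof (rule Lim_in_closed_set)
  show "(\<lambda>K. (1 / (\<Sum>j\<in>A K. w K j)) *\<^sub>R (\<Sum>j\<in>A K. w K j *\<^sub>R c j)) \<longlonglongrightarrow> (1 / s) *\<^sub>R V"
    by (intro tendsto_intros assms(5,7)) (use assms(6) in simp)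
  have "\<forall>\<^sub>F K in sequentially. 0 < (\<Sum>j\<in>A K. w K j)"
    using order_tendstoD(1)[OF assms(5,6)] .
  then show "\<forall>\<^sub>F K in sequentially. (1 / (\<Sum>j\<in>A K. w K j)) *\<^sub>R (\<Sum>j\<in>A K. w K j *\<^sub>R c j) \<in> closure D"
  proof eventually_elim
    case (elim K)
    show ?case
      using closure_subset normalized_weighted_sum_mem_convex[OF assms(2,1,3,4) elim] by (rule subsetD)
  qed
qed simp_all

lemma convex_hull_image_explicit:
  assumes "z \<in> convex hull (c ` J)"
  shows "\<exists>F \<mu>. finite F \<and> F \<subseteq> J \<and> (\<forall>j\<in>F. 0 \<le> \<mu> j) \<and> sum \<mu> F = 1 \<and> (\<Sum>j\<in>F. \<mu> j *\<^sub>R c j) = z"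
proof -
  obtain U u where U: "finite U" "U \<subseteq> c ` J" "\<forall>x\<in>U. 0 \<le> u x" "sum u U = 1"
    "(\<Sum>v\<in>U. u v *\<^sub>R v) = z"
    using assms unfolding convex_hull_explicit by blast
  obtain F where F: "F \<subseteq> J" "inj_on c F" "U = c ` F"
    using U(2) by (auto simp: subset_image_inj)
  have "finite F" using U(1) F(2,3) finite_image_iff by blast
  moreover have "sum (u \<circ> c) F = 1" "(\<Sum>j\<in>F. (u \<circ> c) j *\<^sub>R c j) = z"
    using U(4,5) F(2,3) by (simp_all add: sum.reindex)
  ultimately show ?thesis using U(3) F(1,3) by (intro exI[of _ F] exI[of _ "u \<circ> c"]) auto
qed

lemma finite_subset_UN_mono:
  fixes I :: "nat \<Rightarrow> 'a set"
  assumes "mono I" "finite F" "F \<subseteq> (\<Union>K. I K)"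
  shows "\<exists>K. F \<subseteq> I K"
proof -
  have "\<forall>j\<in>F. \<exists>K. j \<in> I K" using assms(3) by auto
  from bchoice[OF this] obtain k where k: "\<forall>j\<in>F. j \<in> I (k j)" by blast
  have "F \<subseteq> I (Max (k ` F))"
  proof
    fix j assume "j \<in> F"
    then have "I (k j) \<subseteq> I (Max (k ` F))" using assms(2) by (intro monoD[OF assms(1)]) auto
    then show "j \<in> I (Max (k ` F))" using k \<open>j \<in> F\<close> by blast
  qed
  then show ?thesis ..
qed

lemma exists_scaled_weights_below:
  fixes q :: "'j \<Rightarrow> real"
  assumes "finite F" "\<And>j. j \<in> F \<Longrightarrow> 0 \<le> \<mu> j" "sum \<mu> F = 1" "\<And>j. j \<in> F \<Longrightarrow> 0 < q j"
  shows "\<exists>\<epsilon>>0. \<epsilon> \<le> 1/2 \<and> (\<forall>j\<in>F. \<epsilon> * \<mu> j \<le> q j)"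
proof -
  define \<epsilon> where "\<epsilon> = Min (insert (1/2) (q ` F))"
  have fin: "finite (insert (1/2) (q ` F))" using assms(1) by simp
  have "0 < \<epsilon>" unfolding \<epsilon>_def using fin assms(4) by (subst Min_gr_iff) auto
  moreover have "\<epsilon> \<le> 1/2" unfolding \<epsilon>_def by (rule Min_le) (use fin in auto)
  moreover have "\<epsilon> * \<mu> j \<le> q j" if "j \<in> F" for j
  proof -
    have "\<mu> j \<le> sum \<mu> F" by (rule member_le_sum[OF that]) (use assms in auto)
    then have "\<epsilon> * \<mu> j \<le> \<epsilon>" using assms(3) \<open>0 < \<epsilon>\<close> by (simp add: mult_left_le)
    also have "\<epsilon> \<le> q j" unfolding \<epsilon>_def by (rule Min_le) (use fin that in auto)
    finally show ?thesis .
  qed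
  ultimately show ?thesis by blast
qed

lemma limit_minus_finite_combination_mem_closure:
  fixes c :: "'j \<Rightarrow> 'v::real_normed_vector"
  assumes "convex D" and I: "\<And>K. finite (I K)" and q: "\<And>j. 0 \<le> q j"
    and c_mem_D: "\<And>K j. j \<in> I K \<Longrightarrow> 0 < q j \<Longrightarrow> c j \<in> D"
    and sum_q: "(\<lambda>K. \<Sum>j\<in>I K. q j) \<longlonglongrightarrow> 1"
    and sum_qc: "(\<lambda>K. \<Sum>j\<in>I K. q j *\<^sub>R c j) \<longlonglongrightarrow> Z"
    and F_sub: "\<And>K. F \<subseteq> I (K + K0)" and \<mu>: "\<And>j. j \<in> F \<Longrightarrow> 0 \<le> \<mu> j" "sum \<mu> F = 1"
    and \<epsilon>: "0 < \<epsilon>" "\<epsilon> < 1" "\<And>j. j \<in> F \<Longrightarrow> \<epsilon> * \<mu> j \<le> q j"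
  shows "(1 / (1 - \<epsilon>)) *\<^sub>R (Z - \<epsilon> *\<^sub>R (\<Sum>j\<in>F. \<mu> j *\<^sub>R c j)) \<in> closure D"
proof (rule normalized_weighted_sum_limit_mem_closure[OF \<open>convex D\<close>, where A="\<lambda>K. I (K + K0)"])
  define q' where "q' j = q j - (if j \<in> F then \<epsilon> * \<mu> j else 0)" for j
  have removed: "(\<Sum>j\<in>I (K + K0). (if j \<in> F then \<epsilon> * \<mu> j else 0) *\<^sub>R f j) = \<epsilon> *\<^sub>R (\<Sum>j\<in>F. \<mu> j *\<^sub>R f j)"
    for K and f :: "'j \<Rightarrow> 'w::real_vector"
  proof -
    have "(\<Sum>j\<in>I (K + K0). (if j \<in> F then \<epsilon> * \<mu> j else 0) *\<^sub>R f j)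
        = (\<Sum>j\<in>I (K + K0). if j \<in> F then (\<epsilon> * \<mu> j) *\<^sub>R f j else 0)"
      by (intro sum.cong) auto
    also have "\<dots> = (\<Sum>j\<in>F. (\<epsilon> * \<mu> j) *\<^sub>R f j)"
      using F_sub[of K] I by (simp add: sum.inter_restrict[symmetric] Int_absorb1)
    finally show ?thesis by (simp add: scaleR_sum_right)
  qed
  have sum_q': "(\<Sum>j\<in>I (K + K0). q' j) = (\<Sum>j\<in>I (K + K0). q j) - \<epsilon>" for K
    using removed[of "\<lambda>_. 1 :: real" K] \<mu>(2) by (simp add: q'_def sum_subtractf)
  show "(\<lambda>K. \<Sum>j\<in>I (K + K0). q' j) \<longlonglongrightarrow> 1 - \<epsilon>"
    unfolding sum_q' using LIMSEQ_ignore_initial_segment[OF sum_q, of K0] by (rule tendsto_diff) simp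
  have sum_qc': "(\<Sum>j\<in>I (K + K0). q' j *\<^sub>R c j)
      = (\<Sum>j\<in>I (K + K0). q j *\<^sub>R c j) - \<epsilon> *\<^sub>R (\<Sum>j\<in>F. \<mu> j *\<^sub>R c j)" for K
    using removed[of c K] by (simp add: q'_def scaleR_diff_left sum_subtractf)
  show "(\<lambda>K. \<Sum>j\<in>I (K + K0). q' j *\<^sub>R c j) \<longlonglongrightarrow> Z - \<epsilon> *\<^sub>R (\<Sum>j\<in>F. \<mu> j *\<^sub>R c j)"
    unfolding sum_qc' using LIMSEQ_ignore_initial_segment[OF sum_qc, of K0] by (rule tendsto_diff) simp
  have "0 \<le> (if j \<in> F then \<epsilon> * \<mu> j else 0)" for j
    using \<epsilon>(1) \<mu>(1) by simp
  then have q'_le: "q' j \<le> q j" for j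
    unfolding q'_def by (simp add: diff_le_eq)
  show "c j \<in> D" if "j \<in> I (K + K0)" "0 < q' j" for K j
    using c_mem_D[OF that(1)] q'_le[of j] that(2) by linarith
  show "0 \<le> q' j" for j
    using \<epsilon>(3) q by (simp add: q'_def)
qed (use I \<epsilon> in auto)

lemma convex_shrink_mem_rel_interior:
  fixes D :: "'v::euclidean_space set"
  assumes "convex D" "z \<in> rel_interior D" "(1 / (1 - \<epsilon>)) *\<^sub>R (Z - \<epsilon> *\<^sub>R z) \<in> closure D"
    and "0 < \<epsilon>" "\<epsilon> < 1"
  shows "Z \<in> rel_interior D"
proof -
  define W where "W = (1 / (1 - \<epsilon>)) *\<^sub>R (Z - \<epsilon> *\<^sub>R z)"
  have "W - \<epsilon> *\<^sub>R (W - z) \<in> rel_interior D"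
    using rel_interior_closure_convex_shrink[OF assms(1,2)] assms(3-5) unfolding W_def by simp
  moreover have "W - \<epsilon> *\<^sub>R (W - z) = (1 - \<epsilon>) *\<^sub>R W + \<epsilon> *\<^sub>R z"
    by (simp add: algebra_simps)
  moreover have "(1 - \<epsilon>) *\<^sub>R W = Z - \<epsilon> *\<^sub>R z"
    unfolding W_def using assms(5) by simp
  ultimately show ?thesis by simp
qed

text \<open>The limit lies in the closure of the convex hull \<open>D\<close> of the points with positive weight;
  subtracting from it a small multiple of a relative interior point of \<open>D\<close> keeps it in the closure,
  which places it in the relative interior of \<open>D\<close>.\<close>

lemma countable_convex_combination_mem:
  fixes c :: "'j \<Rightarrow> 'v::euclidean_space"
  assumes "convex C" and I: "\<And>K. finite (I K)" "mono I"
    and q: "\<And>j. 0 \<le> q j" and "\<And>j. c j \<in> C"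
    and sum_q: "(\<lambda>K. \<Sum>j\<in>I K. q j) \<longlonglongrightarrow> 1"
    and sum_qc: "(\<lambda>K. \<Sum>j\<in>I K. q j *\<^sub>R c j) \<longlonglongrightarrow> Z"
  shows "Z \<in> C"
proof -
  define J where "J = {j. (\<exists>K. j \<in> I K) \<and> 0 < q j}"
  define D where "D = convex hull (c ` J)"
  have "convex D" unfolding D_def by simp
  have c_mem_D: "c j \<in> D" if "j \<in> I K" "0 < q j" for j K
    unfolding D_def using that by (intro hull_inc) (auto simp: J_def)
  have "J \<noteq> {}"
  proof
    assume "J = {}"
    then have "(\<Sum>j\<in>I K. q j) = 0" for K
      using q by (intro sum.neutral) (fastforce simp: J_def order.strict_iff_order)
    then show False using LIMSEQ_unique[OF sum_q, of 0] by simp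
  qed
  then obtain z where z: "z \<in> rel_interior D"
    using rel_interior_eq_empty[OF \<open>convex D\<close>] unfolding D_def by auto
  then have "z \<in> convex hull (c ` J)"
    using rel_interior_subset unfolding D_def by blast
  from convex_hull_image_explicit[OF this] obtain F \<mu>
    where F: "finite F" "F \<subseteq> J" and \<mu>: "\<And>j. j \<in> F \<Longrightarrow> 0 \<le> \<mu> j" "sum \<mu> F = 1"
    and z_eq: "(\<Sum>j\<in>F. \<mu> j *\<^sub>R c j) = z"
    by blast
  have "F \<subseteq> (\<Union>K. I K)" using F(2) unfolding J_def by blast
  then obtain K0 where "F \<subseteq> I K0"
    using finite_subset_UN_mono[OF I(2) F(1)] by blast
  then have F_sub: "F \<subseteq> I (K + K0)" for K
    using monoD[OF I(2), of K0 "K + K0"] by auto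
  have "\<And>j. j \<in> F \<Longrightarrow> 0 < q j" using F(2) unfolding J_def by blast
  with F(1) \<mu> obtain \<epsilon> where \<epsilon>: "0 < \<epsilon>" "\<epsilon> \<le> 1/2" "\<And>j. j \<in> F \<Longrightarrow> \<epsilon> * \<mu> j \<le> q j"
    using exists_scaled_weights_below[of F \<mu> q] by blast
  have "(1 / (1 - \<epsilon>)) *\<^sub>R (Z - \<epsilon> *\<^sub>R z) \<in> closure D"
    using limit_minus_finite_combination_mem_closure[OF \<open>convex D\<close> I(1) q c_mem_D sum_q sum_qc F_sub \<mu>]
      \<epsilon> z_eq by simp
  then have "Z \<in> rel_interior D"
    using convex_shrink_mem_rel_interior[OF \<open>convex D\<close> z] \<epsilon> by simp
  moreover have "D \<subseteq> C" unfolding D_def using assms(1,5) by (intro hull_minimal) auto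
  ultimately show ?thesis using rel_interior_subset by blast
qed
section \<open>Reachability probabilities\<close>

definition shift_strategy :: "('s \<times> 'a) list \<Rightarrow> ('s, 'a) strategy \<Rightarrow> ('s, 'a) strategy" where
  "shift_strategy p \<sigma> = (\<lambda>h. \<sigma> (p @ h))"

lemma reach_within_append:
  "reach_within G \<sigma> \<tau> X k (p @ h) t
     = reach_within G (shift_strategy p \<sigma>) (shift_strategy p \<tau>) X k h t"
proof (induction k arbitrary: h t)
  case (Suc k)
  have "reach_within G \<sigma> \<tau> X k (p @ h @ [(t, a)])
     = reach_within G (shift_strategy p \<sigma>) (shift_strategy p \<tau>) X k (h @ [(t, a)])" for a
    using Suc.IH[of "h @ [(t, a)]"] by auto
  then show ?case by (simp add: shift_strategy_def)
qed simp

definition first_state :: "('s \<times> 'a) list \<Rightarrow> 's \<Rightarrow> 's" where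
  "first_state h t = (if h = [] then t else fst (hd h))"

lemma first_state_snoc: "first_state (h @ [(t, a)]) t' = first_state h t"
  unfolding first_state_def by (cases h) auto

lemma reach_within_cong_first_state:
  assumes "\<And>h t. first_state h t = u \<Longrightarrow> \<sigma> h t = \<sigma>' h t \<and> \<tau> h t = \<tau>' h t"
    and "first_state h t = u"
  shows "reach_within G \<sigma> \<tau> X k h t = reach_within G \<sigma>' \<tau>' X k h t"
  using assms(2)
proof (induction k arbitrary: h t)
  case (Suc k)
  have "reach_within G \<sigma> \<tau> X k (h @ [(t, a)]) = reach_within G \<sigma>' \<tau>' X k (h @ [(t, a)])" for a
    using Suc by (auto simp: first_state_snoc)
  then show ?case using assms(1)[OF Suc.prems] by simp
qed simp

lemma reach_within_target: "t \<in> X \<Longrightarrow> reach_within G \<sigma> \<tau> X k h t = 1"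
  by (cases k) auto

lemma prob_reach_target: "t \<in> X \<Longrightarrow> prob_reach G \<sigma> \<tau> X t = 1"
  unfolding prob_reach_def by (simp add: reach_within_target)

lemma achievableI:
  assumes "nonneg_vec v" "max_strategy G \<sigma>"
    and "\<And>\<tau> i. min_strategy G \<tau> \<Longrightarrow> v $ i \<le> prob_reach G \<sigma> \<tau> (T i) s"
  shows "v \<in> achievable G T s"
  using assms unfolding achievable_def by auto

lemma sum_pmf_return:
  assumes "finite A" "x \<in> A"
  shows "(\<Sum>y\<in>A. pmf (return_pmf x) y * f y) = (f x :: real)"
proof -
  have "(\<Sum>y\<in>A. pmf (return_pmf x) y * f y) = (\<Sum>y\<in>A. if y = x then f y else 0)"
    by (intro sum.cong) (auto simp: pmf_return)
  then show ?thesis using assms by (simp add: sum.delta')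
qed

lemma expectation_pmf_eq_sum:
  assumes "finite A" "set_pmf M \<subseteq> A"
  shows "measure_pmf.expectation M f = (\<Sum>a\<in>A. pmf M a * f a)"
  using integral_measure_pmf_real[of A M f] assms by (auto simp: mult.commute)

locale game =
  fixes G :: "('s, 'a) sgame"
  assumes wf: "wf_game G"
begin

abbreviation "S \<equiv> states G"

lemma finite_states: "finite S"
  using wf by (simp add: wf_game_def)

lemma states_eq: "S = max_states G \<union> min_states G"
  using wf by (simp add: wf_game_def)

lemma avail_nonempty: "t \<in> S \<Longrightarrow> avail G t \<noteq> {}"
  using wf by (simp add: wf_game_def)

lemma finite_avail: "t \<in> S \<Longrightarrow> finite (avail G t)"
  using wf unfolding wf_game_def by (meson finite_subset)

lemma set_pmf_trans_subset: "t \<in> S \<Longrightarrow> a \<in> avail G t \<Longrightarrow> set_pmf (trans G t a) \<subseteq> S"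
  using wf by (simp add: wf_game_def)

lemma sum_pmf_trans: "t \<in> S \<Longrightarrow> a \<in> avail G t \<Longrightarrow> (\<Sum>s'\<in>S. pmf (trans G t a) s') = 1"
  by (rule sum_pmf_eq_1[OF finite_states set_pmf_trans_subset])

definition default_strategy :: "('s, 'a) strategy" where
  "default_strategy h t = return_pmf (SOME a. a \<in> avail G t)"

lemma max_strategy_default: "max_strategy G default_strategy"
  unfolding max_strategy_def default_strategy_def using avail_nonempty states_eq
  by (auto simp: some_in_eq)

lemma min_strategy_default: "min_strategy G default_strategy"
  unfolding min_strategy_def default_strategy_def using avail_nonempty states_eq
  by (auto simp: some_in_eq)

lemma max_strategy_shift: "max_strategy G \<sigma> \<Longrightarrow> max_strategy G (shift_strategy p \<sigma>)"
  unfolding max_strategy_def shift_strategy_def by auto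

lemma min_strategy_shift: "min_strategy G \<tau> \<Longrightarrow> min_strategy G (shift_strategy p \<tau>)"
  unfolding min_strategy_def shift_strategy_def by auto

definition move :: "('s, 'a) strategy \<Rightarrow> ('s, 'a) strategy \<Rightarrow> ('s \<times> 'a) list \<Rightarrow> 's \<Rightarrow> 'a pmf" where
  "move \<sigma> \<tau> h t = (if t \<in> max_states G then \<sigma> h t else \<tau> h t)"

context
  fixes \<sigma> \<tau>
  assumes \<sigma>: "max_strategy G \<sigma>" and \<tau>: "min_strategy G \<tau>"
begin

lemma set_pmf_move: "t \<in> S \<Longrightarrow> set_pmf (move \<sigma> \<tau> h t) \<subseteq> avail G t"
  using \<sigma> \<tau> states_eq unfolding move_def max_strategy_def min_strategy_def by (auto; blast)

lemma reach_within_Suc: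
  assumes "t \<in> S"
  shows "reach_within G \<sigma> \<tau> X (Suc k) h t = (if t \<in> X then 1 else
     (\<Sum>a\<in>avail G t. pmf (move \<sigma> \<tau> h t) a *
        (\<Sum>s'\<in>S. pmf (trans G t a) s' * reach_within G \<sigma> \<tau> X k (h @ [(t, a)]) s')))"
proof -
  have "measure_pmf.expectation (trans G t a) f = (\<Sum>s'\<in>S. pmf (trans G t a) s' * f s')"
    if "a \<in> avail G t" for a f
    by (rule expectation_pmf_eq_sum[OF finite_states set_pmf_trans_subset[OF assms that]])
  moreover have "measure_pmf.expectation (move \<sigma> \<tau> h t) f
      = (\<Sum>a\<in>avail G t. pmf (move \<sigma> \<tau> h t) a * f a)" for f
    by (rule expectation_pmf_eq_sum[OF finite_avail[OF assms] set_pmf_move[OF assms]])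
  ultimately show ?thesis
    unfolding reach_within.simps move_def[symmetric] by (auto intro!: sum.cong)
qed

lemma reach_within_bounds:
  assumes "t \<in> S"
  shows "0 \<le> reach_within G \<sigma> \<tau> X k h t \<and> reach_within G \<sigma> \<tau> X k h t \<le> 1"
  using assms
proof (induction k arbitrary: h t)
  case (Suc k)
  let ?r = "\<lambda>a. \<Sum>s'\<in>S. pmf (trans G t a) s' * reach_within G \<sigma> \<tau> X k (h @ [(t, a)]) s'"
  have r: "0 \<le> ?r a \<and> ?r a \<le> 1" if a: "a \<in> avail G t" for a
  proof -
    have "?r a \<le> (\<Sum>s'\<in>S. pmf (trans G t a) s')"
      by (intro sum_mono) (use Suc.IH in \<open>auto intro: mult_left_le\<close>)
    then show ?thesis using Suc.IH sum_pmf_trans[OF Suc.prems a] by (auto intro!: sum_nonneg)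
  qed
  have "(\<Sum>a\<in>avail G t. pmf (move \<sigma> \<tau> h t) a * ?r a) \<le> (\<Sum>a\<in>avail G t. pmf (move \<sigma> \<tau> h t) a)"
    by (intro sum_mono) (use r in \<open>auto intro: mult_left_le\<close>)
  also have "\<dots> = 1"
    by (rule sum_pmf_eq_1[OF finite_avail[OF Suc.prems] set_pmf_move[OF Suc.prems]])
  finally show ?case unfolding reach_within_Suc[OF Suc.prems] using r by (auto intro!: sum_nonneg)
qed simp

lemma reach_within_le_Suc:
  assumes "t \<in> S"
  shows "reach_within G \<sigma> \<tau> X k h t \<le> reach_within G \<sigma> \<tau> X (Suc k) h t"
  using assms
proof (induction k arbitrary: h t)
  case 0
  then show ?case
    using reach_within_bounds[OF 0, of X "Suc 0" h]
    by (cases "t \<in> X") (simp_all add: reach_within_target del: reach_within.simps(2))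
next
  case (Suc k)
  then show ?case
    unfolding reach_within_Suc[OF Suc.prems, of _ "Suc k"] reach_within_Suc[OF Suc.prems, of _ k]
    using set_pmf_trans_subset[OF Suc.prems] by (auto intro!: sum_mono mult_left_mono)
qed

lemma prob_reach_tendsto:
  assumes "t \<in> S"
  shows "(\<lambda>k. reach_within G \<sigma> \<tau> X k [] t) \<longlonglongrightarrow> prob_reach G \<sigma> \<tau> X t"
  unfolding prob_reach_def
  using reach_within_le_Suc[OF assms] reach_within_bounds[OF assms]
  by (intro LIMSEQ_incseq_SUP) (auto simp: incseq_Suc_iff intro!: bdd_aboveI[where M=1])

lemma reach_within_le_prob_reach:
  assumes "t \<in> S"
  shows "reach_within G \<sigma> \<tau> X k [] t \<le> prob_reach G \<sigma> \<tau> X t"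
  unfolding prob_reach_def using reach_within_bounds[OF assms]
  by (intro cSUP_upper bdd_aboveI[where M=1]) auto

lemma prob_reach_bounds:
  assumes "t \<in> S"
  shows "0 \<le> prob_reach G \<sigma> \<tau> X t \<and> prob_reach G \<sigma> \<tau> X t \<le> 1"
proof
  show "0 \<le> prob_reach G \<sigma> \<tau> X t"
    using reach_within_le_prob_reach[OF assms, of X 0] reach_within_bounds[OF assms, of X 0 "[]"]
    by linarith
  show "prob_reach G \<sigma> \<tau> X t \<le> 1"
    using reach_within_bounds[OF assms] unfolding prob_reach_def by (auto intro!: cSUP_least)
qed

end

end

section \<open>Mixing Maximizer strategies\<close>

definition mix_pmf :: "real \<Rightarrow> 'x pmf \<Rightarrow> 'x pmf \<Rightarrow> 'x pmf" where
  "mix_pmf \<alpha> p q = bind_pmf (bernoulli_pmf \<alpha>) (\<lambda>b. if b then p else q)"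

lemma pmf_mix_pmf: "0 \<le> \<alpha> \<Longrightarrow> \<alpha> \<le> 1 \<Longrightarrow> pmf (mix_pmf \<alpha> p q) x = \<alpha> * pmf p x + (1 - \<alpha>) * pmf q x"
  unfolding mix_pmf_def pmf_bind by simp

lemma set_mix_pmf: "set_pmf (mix_pmf \<alpha> p q) \<subseteq> set_pmf p \<union> set_pmf q"
  unfolding mix_pmf_def by (auto split: if_splits)

context game
begin

definition choice_prob :: "('s, 'a) strategy \<Rightarrow> ('s \<times> 'a) list \<Rightarrow> real" where
  "choice_prob \<sigma> h = (\<Prod>j<length h. if fst (h ! j) \<in> max_states G
     then pmf (\<sigma> (take j h) (fst (h ! j))) (snd (h ! j)) else 1)"

lemma choice_prob_Nil [simp]: "choice_prob \<sigma> [] = 1"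
  by (simp add: choice_prob_def)

lemma choice_prob_snoc:
  "choice_prob \<sigma> (h @ [(t, a)]) = choice_prob \<sigma> h * (if t \<in> max_states G then pmf (\<sigma> h t) a else 1)"
proof -
  have "(\<Prod>j<length h. if fst ((h @ [(t, a)]) ! j) \<in> max_states G
      then pmf (\<sigma> (take j (h @ [(t, a)])) (fst ((h @ [(t, a)]) ! j))) (snd ((h @ [(t, a)]) ! j)) else 1)
    = choice_prob \<sigma> h"
    unfolding choice_prob_def by (intro prod.cong) (auto simp: nth_append)
  then show ?thesis unfolding choice_prob_def by (simp add: prod.lessThan_Suc nth_append)
qed

lemma choice_prob_nonneg: "0 \<le> choice_prob \<sigma> h"
  unfolding choice_prob_def by (intro prod_nonneg) auto

definition opponent_prob :: "('s, 'a) strategy \<Rightarrow> ('s \<times> 'a) list \<Rightarrow> 's \<Rightarrow> 'a \<Rightarrow> real" where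
  "opponent_prob \<tau> h t a = (if t \<in> max_states G then 1 else pmf (\<tau> h t) a)"

lemma choice_prob_move:
  "choice_prob \<sigma> h * pmf (move \<sigma> \<tau> h t) a = choice_prob \<sigma> (h @ [(t, a)]) * opponent_prob \<tau> h t a"
  by (simp add: choice_prob_snoc move_def opponent_prob_def)

text \<open>The probability of a history is the product of the Maximizer factor \<^const>\<open>choice_prob\<close> and
  the Minimizer factors \<^const>\<open>opponent_prob\<close>; any weight that evolves like the Maximizer factor can
  be pushed through one step of the recursion.\<close>

lemma weighted_reach_within_Suc:
  assumes "max_strategy G \<sigma>" "min_strategy G \<tau>" "t \<in> S" "t \<notin> X"
    and w: "\<And>a. w h * pmf (move \<sigma> \<tau> h t) a = w (h @ [(t, a)]) * opponent_prob \<tau> h t a"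
  shows "w h * reach_within G \<sigma> \<tau> X (Suc k) h t
    = (\<Sum>a\<in>avail G t. \<Sum>s'\<in>S. opponent_prob \<tau> h t a * pmf (trans G t a) s'
         * (w (h @ [(t, a)]) * reach_within G \<sigma> \<tau> X k (h @ [(t, a)]) s'))"
proof -
  have "w h * reach_within G \<sigma> \<tau> X (Suc k) h t
      = (\<Sum>a\<in>avail G t. (w h * pmf (move \<sigma> \<tau> h t) a)
           * (\<Sum>s'\<in>S. pmf (trans G t a) s' * reach_within G \<sigma> \<tau> X k (h @ [(t, a)]) s'))"
    unfolding reach_within_Suc[OF assms(1-3)] using assms(4) by (simp add: sum_distrib_left mult.assoc)
  also have "\<dots> = (\<Sum>a\<in>avail G t. (w (h @ [(t, a)]) * opponent_prob \<tau> h t a)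
           * (\<Sum>s'\<in>S. pmf (trans G t a) s' * reach_within G \<sigma> \<tau> X k (h @ [(t, a)]) s'))"
    by (simp only: w)
  finally show ?thesis by (simp add: sum_distrib_left mult_ac)
qed

definition mix_strategy :: "real \<Rightarrow> ('s, 'a) strategy \<Rightarrow> ('s, 'a) strategy \<Rightarrow> ('s, 'a) strategy" where
  "mix_strategy l \<sigma>1 \<sigma>2 h t = (let W = l * choice_prob \<sigma>1 h + (1 - l) * choice_prob \<sigma>2 h in
     if W = 0 then \<sigma>1 h t else mix_pmf (l * choice_prob \<sigma>1 h / W) (\<sigma>1 h t) (\<sigma>2 h t))"

lemma max_strategy_mix:
  assumes "max_strategy G \<sigma>1" "max_strategy G \<sigma>2"
  shows "max_strategy G (mix_strategy l \<sigma>1 \<sigma>2)"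
  using assms set_mix_pmf unfolding max_strategy_def mix_strategy_def Let_def
  by (smt (verit) Un_subset_iff subset_trans)

context
  fixes l :: real and \<sigma>1 \<sigma>2 :: "('s, 'a) strategy"
  assumes l: "0 \<le> l" "l \<le> 1"
begin

abbreviation mix_weight :: "('s \<times> 'a) list \<Rightarrow> real" where
  "mix_weight h \<equiv> l * choice_prob \<sigma>1 h + (1 - l) * choice_prob \<sigma>2 h"

lemma mix_weight_pmf:
  "mix_weight h * pmf (mix_strategy l \<sigma>1 \<sigma>2 h t) a
     = l * choice_prob \<sigma>1 h * pmf (\<sigma>1 h t) a + (1 - l) * choice_prob \<sigma>2 h * pmf (\<sigma>2 h t) a"
proof -
  define w1 where "w1 = l * choice_prob \<sigma>1 h"
  define w2 where "w2 = (1 - l) * choice_prob \<sigma>2 h"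
  have "0 \<le> w1" "0 \<le> w2"
    using l choice_prob_nonneg unfolding w1_def w2_def by auto
  have "(w1 + w2) * pmf (mix_strategy l \<sigma>1 \<sigma>2 h t) a = w1 * pmf (\<sigma>1 h t) a + w2 * pmf (\<sigma>2 h t) a"
  proof (cases "w1 + w2 = 0")
    case True
    then have "w1 = 0" "w2 = 0" using \<open>0 \<le> w1\<close> \<open>0 \<le> w2\<close> by linarith+
    then show ?thesis by simp
  next
    case False
    then have pos: "0 < w1 + w2" using \<open>0 \<le> w1\<close> \<open>0 \<le> w2\<close> by linarith
    have \<alpha>: "0 \<le> w1 / (w1 + w2)" "w1 / (w1 + w2) \<le> 1" "1 - w1 / (w1 + w2) = w2 / (w1 + w2)"
      using pos \<open>0 \<le> w1\<close> \<open>0 \<le> w2\<close> by (simp_all add: divide_le_eq_1 field_simps)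
    have "(w1 + w2) * pmf (mix_strategy l \<sigma>1 \<sigma>2 h t) a
        = (w1 + w2) * (w1 / (w1 + w2) * pmf (\<sigma>1 h t) a + w2 / (w1 + w2) * pmf (\<sigma>2 h t) a)"
      using False pmf_mix_pmf[OF \<alpha>(1,2)] unfolding mix_strategy_def Let_def w1_def[symmetric]
        w2_def[symmetric] \<alpha>(3) by simp
    also have "\<dots> = w1 * pmf (\<sigma>1 h t) a + w2 * pmf (\<sigma>2 h t) a"
    proof -
      have "(w1 + w2) * (w1 / (w1 + w2)) = w1" "(w1 + w2) * (w2 / (w1 + w2)) = w2"
        using pos by simp_all
      then show ?thesis by (simp only: distrib_left mult.assoc[symmetric])
    qed
    finally show ?thesis .
  qed
  then show ?thesis unfolding w1_def w2_def .
qed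

lemma mix_weight_move:
  "mix_weight h * pmf (move (mix_strategy l \<sigma>1 \<sigma>2) \<tau> h t) a
     = mix_weight (h @ [(t, a)]) * opponent_prob \<tau> h t a"
  using mix_weight_pmf[of h t a]
  by (simp add: move_def opponent_prob_def choice_prob_snoc algebra_simps)

text \<open>Kuhn's theorem for a mixture: the behavioural strategy \<^const>\<open>mix_strategy\<close> induces the same
  distribution over plays as following the first strategy with probability \<open>l\<close> and the second one
  otherwise.\<close>

lemma reach_within_mix_strategy:
  assumes \<sigma>1: "max_strategy G \<sigma>1" and \<sigma>2: "max_strategy G \<sigma>2" and \<tau>: "min_strategy G \<tau>"
    and "t \<in> S"
  shows "mix_weight h * reach_within G (mix_strategy l \<sigma>1 \<sigma>2) \<tau> X k h t
       = l * (choice_prob \<sigma>1 h * reach_within G \<sigma>1 \<tau> X k h t)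
         + (1 - l) * (choice_prob \<sigma>2 h * reach_within G \<sigma>2 \<tau> X k h t)"
  using assms(4)
proof (induction k arbitrary: h t)
  case (Suc k)
  let ?m = "mix_strategy l \<sigma>1 \<sigma>2"
  let ?step = "\<lambda>w \<sigma>. \<Sum>a\<in>avail G t. \<Sum>s'\<in>S. opponent_prob \<tau> h t a * pmf (trans G t a) s'
         * (w (h @ [(t, a)]) * reach_within G \<sigma> \<tau> X k (h @ [(t, a)]) s')"
  show ?case
  proof (cases "t \<in> X")
    case False
    have "mix_weight h * reach_within G ?m \<tau> X (Suc k) h t = ?step mix_weight ?m"
      by (rule weighted_reach_within_Suc[OF max_strategy_mix[OF \<sigma>1 \<sigma>2] \<tau> Suc.prems False mix_weight_move])
    also have "\<dots> = (\<Sum>a\<in>avail G t. \<Sum>s'\<in>S. opponent_prob \<tau> h t a * pmf (trans G t a) s'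
         * (l * (choice_prob \<sigma>1 (h @ [(t, a)]) * reach_within G \<sigma>1 \<tau> X k (h @ [(t, a)]) s')
           + (1 - l) * (choice_prob \<sigma>2 (h @ [(t, a)]) * reach_within G \<sigma>2 \<tau> X k (h @ [(t, a)]) s')))"
      by (intro sum.cong refl) (simp add: Suc.IH)
    also have "\<dots> = l * ?step (choice_prob \<sigma>1) \<sigma>1 + (1 - l) * ?step (choice_prob \<sigma>2) \<sigma>2"
      by (simp add: sum_distrib_left sum.distrib distrib_left mult_ac)
    also have "\<dots> = l * (choice_prob \<sigma>1 h * reach_within G \<sigma>1 \<tau> X (Suc k) h t)
         + (1 - l) * (choice_prob \<sigma>2 h * reach_within G \<sigma>2 \<tau> X (Suc k) h t)"
      by (simp only: weighted_reach_within_Suc[OF \<sigma>1 \<tau> Suc.prems False choice_prob_move]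
          weighted_reach_within_Suc[OF \<sigma>2 \<tau> Suc.prems False choice_prob_move])
    finally show ?thesis .
  qed (simp add: algebra_simps)
qed (simp add: algebra_simps)

lemma prob_reach_mix_strategy:
  assumes "max_strategy G \<sigma>1" "max_strategy G \<sigma>2" "min_strategy G \<tau>" "t \<in> S"
  shows "prob_reach G (mix_strategy l \<sigma>1 \<sigma>2) \<tau> X t
       = l * prob_reach G \<sigma>1 \<tau> X t + (1 - l) * prob_reach G \<sigma>2 \<tau> X t"
proof (rule LIMSEQ_unique)
  show "(\<lambda>k. reach_within G (mix_strategy l \<sigma>1 \<sigma>2) \<tau> X k [] t) \<longlonglongrightarrow> prob_reach G (mix_strategy l \<sigma>1 \<sigma>2) \<tau> X t"
    using assms by (intro prob_reach_tendsto max_strategy_mix)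
  have mix: "reach_within G (mix_strategy l \<sigma>1 \<sigma>2) \<tau> X k [] t
      = l * reach_within G \<sigma>1 \<tau> X k [] t + (1 - l) * reach_within G \<sigma>2 \<tau> X k [] t" for k
    using reach_within_mix_strategy[OF assms, of "[]" X k] by simp
  show "(\<lambda>k. reach_within G (mix_strategy l \<sigma>1 \<sigma>2) \<tau> X k [] t)
      \<longlonglongrightarrow> l * prob_reach G \<sigma>1 \<tau> X t + (1 - l) * prob_reach G \<sigma>2 \<tau> X t"
    unfolding mix using assms by (intro tendsto_add tendsto_mult_left prob_reach_tendsto)
qed

end

lemma convex_achievable:
  assumes "t \<in> S"
  shows "convex (achievable G T t)"
proof (rule convexI)
  fix x y and u v :: real
  assume x: "x \<in> achievable G T t" and y: "y \<in> achievable G T t" and uv: "0 \<le> u" "0 \<le> v" "u + v = 1"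
  obtain \<sigma>1 where \<sigma>1: "nonneg_vec x" "max_strategy G \<sigma>1"
    "\<And>\<tau> i. min_strategy G \<tau> \<Longrightarrow> x $ i \<le> prob_reach G \<sigma>1 \<tau> (T i) t"
    using x unfolding achievable_def by auto
  obtain \<sigma>2 where \<sigma>2: "nonneg_vec y" "max_strategy G \<sigma>2"
    "\<And>\<tau> i. min_strategy G \<tau> \<Longrightarrow> y $ i \<le> prob_reach G \<sigma>2 \<tau> (T i) t"
    using y unfolding achievable_def by auto
  have v: "v = 1 - u" using uv by simp
  show "u *\<^sub>R x + v *\<^sub>R y \<in> achievable G T t"
  proof (rule achievableI[OF _ max_strategy_mix[OF \<sigma>1(2) \<sigma>2(2)]])
    show "nonneg_vec (u *\<^sub>R x + v *\<^sub>R y)"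
      using \<sigma>1(1) \<sigma>2(1) uv unfolding nonneg_vec_def by auto
    fix \<tau> i assume \<tau>: "min_strategy G \<tau>"
    have "(u *\<^sub>R x + v *\<^sub>R y) $ i \<le> u * prob_reach G \<sigma>1 \<tau> (T i) t + (1 - u) * prob_reach G \<sigma>2 \<tau> (T i) t"
      using \<sigma>1(3)[OF \<tau>] \<sigma>2(3)[OF \<tau>] uv unfolding v by (auto intro!: add_mono mult_left_mono)
    also have "\<dots> = prob_reach G (mix_strategy u \<sigma>1 \<sigma>2) \<tau> (T i) t"
      using prob_reach_mix_strategy[OF _ _ \<sigma>1(2) \<sigma>2(2) \<tau> assms] uv by simp
    finally show "(u *\<^sub>R x + v *\<^sub>R y) $ i \<le> prob_reach G (mix_strategy u \<sigma>1 \<sigma>2) \<tau> (T i) t" .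
  qed
qed

end

section \<open>Points of the best exit are achievable\<close>

definition exit_candidates :: "('s, 'a) sgame \<Rightarrow> ('n \<Rightarrow> 's set) \<Rightarrow> ('s \<Rightarrow> (real ^ 'n) set)
      \<Rightarrow> 's set \<Rightarrow> (real ^ 'n) set" where
  "exit_candidates G T f U = (if {(s, a) \<in> exits G U. s \<in> max_states G} = {} then {0}
     else (\<Union>(s, a)\<in>{(s, a) \<in> exits G U. s \<in> max_states G}. act_set G T f s a))"

lemma best_exit_eq:
  "best_exit G T f U = msum (dwc {\<Sum>s\<in>U. ind_vec T s}) (convex hull exit_candidates G T f U) \<inter> unit_box"
  unfolding best_exit_def exit_candidates_def Let_def ..

context game
begin

definition first_action_strategy :: "'s \<Rightarrow> 'a \<Rightarrow> ('s \<Rightarrow> ('s, 'a) strategy) \<Rightarrow> ('s, 'a) strategy" where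
  "first_action_strategy s a \<sigma>s h t = (case h of
      [] \<Rightarrow> if t = s then return_pmf a else default_strategy h t
    | _ # h' \<Rightarrow> \<sigma>s (first_state h' t) h' t)"

lemma max_strategy_first_action:
  assumes "a \<in> avail G s" "\<And>s'. max_strategy G (\<sigma>s s')"
  shows "max_strategy G (first_action_strategy s a \<sigma>s)"
  using assms max_strategy_default unfolding max_strategy_def first_action_strategy_def
  by (auto split: list.split)

lemma prob_reach_first_action:
  assumes s: "s \<in> max_states G" "s \<notin> X" and a: "a \<in> avail G s"
    and \<sigma>s: "\<And>s'. max_strategy G (\<sigma>s s')" and \<tau>: "min_strategy G \<tau>"
  shows "prob_reach G (first_action_strategy s a \<sigma>s) \<tau> X s
     = (\<Sum>s'\<in>S. pmf (trans G s a) s' * prob_reach G (\<sigma>s s') (shift_strategy [(s, a)] \<tau>) X s')"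
proof (rule LIMSEQ_unique)
  let ?\<sigma> = "first_action_strategy s a \<sigma>s"
  have "s \<in> S" using s states_eq by auto
  have \<sigma>: "max_strategy G ?\<sigma>" by (rule max_strategy_first_action[OF a \<sigma>s])
  have continue: "reach_within G ?\<sigma> \<tau> X k [(s, a)] s'
      = reach_within G (\<sigma>s s') (shift_strategy [(s, a)] \<tau>) X k [] s'" for k s'
  proof -
    have "reach_within G ?\<sigma> \<tau> X k ([(s, a)] @ []) s'
        = reach_within G (shift_strategy [(s, a)] ?\<sigma>) (shift_strategy [(s, a)] \<tau>) X k [] s'"
      by (rule reach_within_append)
    also have "\<dots> = reach_within G (\<sigma>s s') (shift_strategy [(s, a)] \<tau>) X k [] s'"
      by (rule reach_within_cong_first_state[where u=s'])
        (auto simp: shift_strategy_def first_action_strategy_def first_state_def)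
    finally show ?thesis by simp
  qed
  have "move ?\<sigma> \<tau> [] s = return_pmf a"
    using s by (simp add: move_def first_action_strategy_def)
  then have first_step: "reach_within G ?\<sigma> \<tau> X (Suc k) [] s
      = (\<Sum>s'\<in>S. pmf (trans G s a) s' * reach_within G (\<sigma>s s') (shift_strategy [(s, a)] \<tau>) X k [] s')" for k
    unfolding reach_within_Suc[OF \<sigma> \<tau> \<open>s \<in> S\<close>]
    using s sum_pmf_return[OF finite_avail[OF \<open>s \<in> S\<close>] a] by (simp add: continue)
  show "(\<lambda>k. reach_within G ?\<sigma> \<tau> X (Suc k) [] s)
      \<longlonglongrightarrow> (\<Sum>s'\<in>S. pmf (trans G s a) s' * prob_reach G (\<sigma>s s') (shift_strategy [(s, a)] \<tau>) X s')"
    unfolding first_step by (intro tendsto_sum tendsto_mult_left prob_reach_tendsto \<sigma>s min_strategy_shift[OF \<tau>])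
  show "(\<lambda>k. reach_within G ?\<sigma> \<tau> X (Suc k) [] s) \<longlonglongrightarrow> prob_reach G ?\<sigma> \<tau> X s"
    using prob_reach_tendsto[OF \<sigma> \<tau> \<open>s \<in> S\<close>] by (rule LIMSEQ_Suc)
qed

lemma zero_mem_achievable: "t \<in> S \<Longrightarrow> 0 \<in> achievable G T t"
  unfolding achievable_def nonneg_vec_def
  using max_strategy_default prob_reach_bounds[OF max_strategy_default] by auto

lemma achievable_bounds:
  assumes "t \<in> S" "x \<in> achievable G T t"
  shows "0 \<le> x $ i \<and> x $ i \<le> 1"
proof -
  obtain \<sigma> where \<sigma>: "nonneg_vec x" "max_strategy G \<sigma>"
    "\<And>\<tau> i. min_strategy G \<tau> \<Longrightarrow> x $ i \<le> prob_reach G \<sigma> \<tau> (T i) t"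
    using assms(2) unfolding achievable_def by auto
  show ?thesis
    using \<sigma>(1)[unfolded nonneg_vec_def, rule_format, of i] \<sigma>(3)[OF min_strategy_default, of i]
      prob_reach_bounds[OF \<sigma>(2) min_strategy_default assms(1), of "T i"]
    by linarith
qed

lemma achievable_downward_closed:
  assumes "x \<in> achievable G T t" "\<And>i. 0 \<le> y $ i" "\<And>i. y $ i \<le> x $ i"
  shows "y \<in> achievable G T t"
proof -
  obtain \<sigma> where \<sigma>: "max_strategy G \<sigma>" "\<And>\<tau> i. min_strategy G \<tau> \<Longrightarrow> x $ i \<le> prob_reach G \<sigma> \<tau> (T i) t"
    using assms(1) unfolding achievable_def by auto
  show "y \<in> achievable G T t"
  proof (rule achievableI[OF _ \<sigma>(1)])
    show "nonneg_vec y" using assms(2) by (simp add: nonneg_vec_def)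
    show "y $ i \<le> prob_reach G \<sigma> \<tau> (T i) t" if "min_strategy G \<tau>" for \<tau> i
      using assms(3)[of i] \<sigma>(2)[OF that, of i] by linarith
  qed
qed

text \<open>Coordinates whose target contains the initial state are met with probability 1 by every
  strategy, so they can be raised up to 1 for free.\<close>

lemma dwc_ind_vec_add_achievable:
  assumes "t \<in> S" "c \<in> achievable G T t" "d \<in> dwc {ind_vec T t}" "d + c \<in> unit_box"
  shows "d + c \<in> achievable G T t"
proof -
  obtain \<sigma> where \<sigma>: "max_strategy G \<sigma>" "\<And>\<tau> i. min_strategy G \<tau> \<Longrightarrow> c $ i \<le> prob_reach G \<sigma> \<tau> (T i) t"
    using assms(2) unfolding achievable_def by auto
  show ?thesis
  proof (rule achievableI[OF _ \<sigma>(1)])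
    show "nonneg_vec (d + c)"
      using assms(4) unfolding mem_unit_box_iff nonneg_vec_def by auto
    fix \<tau> i assume "min_strategy G \<tau>"
    show "(d + c) $ i \<le> prob_reach G \<sigma> \<tau> (T i) t"
    proof (cases "t \<in> T i")
      case True
      have "(d + c) $ i \<le> 1" using assms(4) unfolding mem_unit_box_iff by blast
      then show ?thesis using prob_reach_target[OF True, of G \<sigma> \<tau>] by linarith
    next
      case False
      then have "0 \<le> d $ i" "d $ i \<le> 0"
        using assms(3) unfolding mem_dwc_ind_vec_iff by (auto dest: spec[of _ i])
      then show ?thesis using \<sigma>(2)[OF \<open>min_strategy G \<tau>\<close>] by simp
    qed
  qed
qed

lemma exists_achieving_strategies:
  assumes "\<And>s'. s' \<in> S \<Longrightarrow> w s' \<in> achievable G T s'"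
  shows "\<exists>\<sigma>s. \<forall>s'. max_strategy G (\<sigma>s s') \<and> (s' \<in> S \<longrightarrow>
      (\<forall>\<tau> i. min_strategy G \<tau> \<longrightarrow> w s' $ i \<le> prob_reach G (\<sigma>s s') \<tau> (T i) s'))"
proof -
  have "\<exists>\<sigma>. max_strategy G \<sigma> \<and> (s' \<in> S \<longrightarrow>
      (\<forall>\<tau> i. min_strategy G \<tau> \<longrightarrow> w s' $ i \<le> prob_reach G \<sigma> \<tau> (T i) s'))" for s'
  proof (cases "s' \<in> S")
    case True
    then show ?thesis using assms[OF True] unfolding achievable_def by auto
  qed (use max_strategy_default in auto)
  then show ?thesis by (intro choice allI)
qed

lemma expected_achievable_mem_achievable:
  assumes s: "s \<in> max_states G" and a: "a \<in> avail G s"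
    and w: "\<And>s'. s' \<in> S \<Longrightarrow> w s' \<in> achievable G T s'"
  shows "(\<Sum>s'\<in>S. pmf (trans G s a) s' *\<^sub>R w s') \<in> achievable G T s"
proof -
  have "s \<in> S" using s states_eq by auto
  obtain \<sigma>s where \<sigma>s: "\<And>s'. max_strategy G (\<sigma>s s')"
    and guarantee: "\<And>s' \<tau> i. s' \<in> S \<Longrightarrow> min_strategy G \<tau> \<Longrightarrow> w s' $ i \<le> prob_reach G (\<sigma>s s') \<tau> (T i) s'"
    using exists_achieving_strategies[OF w] by blast
  let ?m = "\<Sum>s'\<in>S. pmf (trans G s a) s' *\<^sub>R w s'"
  have w_bounds: "0 \<le> w s' $ i \<and> w s' $ i \<le> 1" if "s' \<in> S" for s' i
    using achievable_bounds[OF that w[OF that]] .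
  show ?thesis
  proof (rule achievableI[OF _ max_strategy_first_action[OF a \<sigma>s]])
    show "nonneg_vec ?m"
      using w_bounds unfolding nonneg_vec_def by (auto intro!: sum_nonneg)
    fix \<tau> i assume \<tau>: "min_strategy G \<tau>"
    show "?m $ i \<le> prob_reach G (first_action_strategy s a \<sigma>s) \<tau> (T i) s"
    proof (cases "s \<in> T i")
      case True
      have "?m $ i \<le> (\<Sum>s'\<in>S. pmf (trans G s a) s')"
        using w_bounds by (auto intro!: sum_mono mult_left_le)
      then show ?thesis
        using sum_pmf_trans[OF \<open>s \<in> S\<close> a] prob_reach_target[OF True, of G _ \<tau>] by simp
    next
      case False
      have "?m $ i \<le> (\<Sum>s'\<in>S. pmf (trans G s a) s' * prob_reach G (\<sigma>s s') (shift_strategy [(s, a)] \<tau>) (T i) s')"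
        using guarantee min_strategy_shift[OF \<tau>] by (auto intro!: sum_mono mult_left_mono)
      then show ?thesis using prob_reach_first_action[OF s False a \<sigma>s \<tau>] by simp
    qed
  qed
qed

lemma act_set_subset_achievable:
  assumes s: "s \<in> max_states G" and a: "a \<in> avail G s"
  shows "act_set G T (achievable G T) s a \<subseteq> achievable G T s"
proof
  fix y assume "y \<in> act_set G T (achievable G T) s a"
  then obtain d f where d: "d \<in> dwc {ind_vec T s}" and y: "y = d + (\<Sum>s'\<in>S. f s')" "y \<in> unit_box"
    and f: "\<forall>s'\<in>S. f s' \<in> sscale (pmf (trans G s a) s') (achievable G T s')"
    unfolding act_set_def msum_def msum_over_eq[OF finite_states] by blast
  have "\<forall>s'\<in>S. \<exists>w. w \<in> achievable G T s' \<and> f s' = pmf (trans G s a) s' *\<^sub>R w"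
    using f unfolding sscale_def by auto
  from bchoice[OF this] obtain w
    where "\<forall>s'\<in>S. w s' \<in> achievable G T s' \<and> f s' = pmf (trans G s a) s' *\<^sub>R w s'" by blast
  then have "(\<Sum>s'\<in>S. f s') \<in> achievable G T s"
    using expected_achievable_mem_achievable[OF s a, of w T] by simp
  then show "y \<in> achievable G T s"
    using dwc_ind_vec_add_achievable d y s states_eq by auto
qed

lemma exit_candidates_subset_achievable:
  assumes "s \<in> max_states G"
  shows "exit_candidates G T (achievable G T) {s} \<subseteq> achievable G T s"
proof
  fix x assume "x \<in> exit_candidates G T (achievable G T) {s}"
  then consider "x = 0" | b where "b \<in> avail G s" "x \<in> act_set G T (achievable G T) s b"
    unfolding exit_candidates_def exits_def by (auto split: if_splits)
  then show "x \<in> achievable G T s"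
  proof cases
    case 1
    then show ?thesis using zero_mem_achievable assms states_eq by auto
  next
    case 2
    then show ?thesis using act_set_subset_achievable[OF assms] by blast
  qed
qed

lemma best_exit_subset_achievable:
  assumes s: "s \<in> max_states G"
  shows "best_exit G T (achievable G T) {s} \<subseteq> achievable G T s"
proof
  fix x assume "x \<in> best_exit G T (achievable G T) {s}"
  then obtain d c where "d \<in> dwc {ind_vec T s}" "c \<in> convex hull exit_candidates G T (achievable G T) {s}"
    "x = d + c" "x \<in> unit_box"
    unfolding best_exit_eq msum_def by auto
  moreover have "s \<in> S" using s states_eq by auto
  moreover have "convex hull exit_candidates G T (achievable G T) {s} \<subseteq> achievable G T s"
    by (intro hull_minimal exit_candidates_subset_achievable[OF s] convex_achievable[OF \<open>s \<in> S\<close>])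
  ultimately show "x \<in> achievable G T s"
    using dwc_ind_vec_add_achievable by blast
qed

end

section \<open>Decomposing a strategy at a Maximizer state\<close>

locale loop_decomposition = game G for G :: "('s, 'a) sgame" +
  fixes s :: 's and \<sigma> :: "('s, 'a) strategy"
  assumes s_max: "s \<in> max_states G" and \<sigma>: "max_strategy G \<sigma>"
begin

lemma s_state: "s \<in> S"
  using s_max states_eq by auto

definition loop_acts :: "'a set" where
  "loop_acts = {a \<in> avail G s. set_pmf (trans G s a) \<subseteq> {s}}"

definition exit_acts :: "'a set" where
  "exit_acts = avail G s - loop_acts"

definition loop_hist :: "'a list \<Rightarrow> ('s \<times> 'a) list" where
  "loop_hist ls = map (\<lambda>l. (s, l)) ls"

definition loops :: "nat \<Rightarrow> 'a list set" where
  "loops k = {ls. set ls \<subseteq> loop_acts \<and> length ls = k}"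

definition act_prob :: "'a list \<Rightarrow> 'a \<Rightarrow> real" where
  "act_prob ls a = pmf (\<sigma> (loop_hist ls) s) a"

definition loop_prob :: "'a list \<Rightarrow> real" where
  "loop_prob ls = choice_prob \<sigma> (loop_hist ls)"

definition exit_prob :: "'a list \<Rightarrow> real" where
  "exit_prob ls = (\<Sum>b\<in>exit_acts. act_prob ls b)"

definition exit_hist :: "'a list \<Rightarrow> 'a \<Rightarrow> ('s \<times> 'a) list" where
  "exit_hist ls b = loop_hist ls @ [(s, b)]"

lemma finite_loop_acts: "finite loop_acts"
  unfolding loop_acts_def using finite_avail[OF s_state] by simp

lemma finite_exit_acts: "finite exit_acts"
  unfolding exit_acts_def using finite_avail[OF s_state] by simp

lemma finite_loops: "finite (loops k)"
  unfolding loops_def using finite_loop_acts by (rule finite_lists_length_eq)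

lemma exit_act_avail: "b \<in> exit_acts \<Longrightarrow> b \<in> avail G s"
  unfolding exit_acts_def by auto

lemma exit_act_not_loop: "b \<in> exit_acts \<Longrightarrow> b \<notin> loop_acts"
  unfolding exit_acts_def by auto

lemma trans_loop_act: "l \<in> loop_acts \<Longrightarrow> trans G s l = return_pmf s"
  unfolding loop_acts_def using set_pmf_subset_singleton[of "trans G s l" s] by auto

lemma loop_prob_Nil [simp]: "loop_prob [] = 1"
  by (simp add: loop_prob_def loop_hist_def)

lemma loop_prob_snoc: "loop_prob (ls @ [l]) = loop_prob ls * act_prob ls l"
  using s_max by (simp add: loop_prob_def loop_hist_def choice_prob_snoc act_prob_def)

lemma loop_prob_nonneg: "0 \<le> loop_prob ls"
  unfolding loop_prob_def by (rule choice_prob_nonneg)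

lemma act_prob_nonneg: "0 \<le> act_prob ls a"
  unfolding act_prob_def by simp

lemma exit_prob_nonneg: "0 \<le> exit_prob ls"
  unfolding exit_prob_def by (auto intro!: sum_nonneg act_prob_nonneg)

lemma sum_act_prob: "(\<Sum>l\<in>loop_acts. act_prob ls l) + exit_prob ls = 1"
proof -
  have "set_pmf (\<sigma> (loop_hist ls) s) \<subseteq> avail G s"
    using \<sigma> s_max unfolding max_strategy_def by auto
  then have "(\<Sum>a\<in>avail G s. act_prob ls a) = 1"
    unfolding act_prob_def by (rule sum_pmf_eq_1[OF finite_avail[OF s_state]])
  moreover have "avail G s = loop_acts \<union> exit_acts" "loop_acts \<inter> exit_acts = {}"
    unfolding exit_acts_def loop_acts_def by auto
  ultimately show ?thesis
    unfolding exit_prob_def using sum.union_disjoint[OF finite_loop_acts finite_exit_acts, of "act_prob ls"]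
    by simp
qed

lemma loops_0: "loops 0 = {[]}"
  unfolding loops_def by auto

lemma sum_loops_Suc: "(\<Sum>ls\<in>loops (Suc k). f ls) = (\<Sum>ls\<in>loops k. \<Sum>l\<in>loop_acts. f (ls @ [l]))"
proof -
  have "loops (Suc k) = (\<lambda>(ls, l). ls @ [l]) ` (loops k \<times> loop_acts)"
  proof (intro set_eqI iffI)
    fix x assume "x \<in> loops (Suc k)"
    then have x: "set x \<subseteq> loop_acts" "length x = Suc k" unfolding loops_def by auto
    then have "x = butlast x @ [last x]" "x \<noteq> []"
      by (metis append_butlast_last_id list.size(3) nat.distinct(1))+
    moreover have "butlast x \<in> loops k" "last x \<in> loop_acts"
      using x \<open>x \<noteq> []\<close> unfolding loops_def by (auto dest: in_set_butlastD)
    ultimately show "x \<in> (\<lambda>(ls, l). ls @ [l]) ` (loops k \<times> loop_acts)"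
      by (intro image_eqI[of _ _ "(butlast x, last x)"]) auto
  qed (auto simp: loops_def)
  moreover have "inj_on (\<lambda>(ls, l). ls @ [l]) (loops k \<times> loop_acts)"
    by (auto simp: inj_on_def)
  ultimately show ?thesis by (simp add: sum.reindex sum.cartesian_product split_def)
qed

lemma loop_mass:
  "(\<Sum>j<k. \<Sum>ls\<in>loops j. loop_prob ls * exit_prob ls) + (\<Sum>ls\<in>loops k. loop_prob ls) = 1"
proof (induction k)
  case 0
  then show ?case by (simp add: loops_0)
next
  case (Suc k)
  have "(\<Sum>ls\<in>loops k. loop_prob ls)
      = (\<Sum>ls\<in>loops k. loop_prob ls * ((\<Sum>l\<in>loop_acts. act_prob ls l) + exit_prob ls))"
    by (simp add: sum_act_prob)
  also have "\<dots> = (\<Sum>ls\<in>loops k. loop_prob ls * exit_prob ls) + (\<Sum>ls\<in>loops (Suc k). loop_prob ls)"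
    by (simp add: sum_loops_Suc loop_prob_snoc algebra_simps sum.distrib sum_distrib_left)
  finally show ?case using Suc.IH by simp
qed

lemma exit_mass_le_1: "(\<Sum>j<k. \<Sum>ls\<in>loops j. loop_prob ls * exit_prob ls) \<le> 1"
  using loop_mass[of k] sum_nonneg[of "loops k" loop_prob] loop_prob_nonneg by force

definition exit_value :: "('s, 'a) strategy \<Rightarrow> 's set \<Rightarrow> 'a list \<Rightarrow> real" where
  "exit_value \<tau> X ls = (\<Sum>b\<in>exit_acts. act_prob ls b * (\<Sum>s'\<in>S. pmf (trans G s b) s' *
       prob_reach G (shift_strategy (exit_hist ls b) \<sigma>) (shift_strategy (exit_hist ls b) \<tau>) X s'))"

lemma reach_within_Suc_loop_hist:
  assumes \<tau>: "min_strategy G \<tau>" and "s \<notin> X"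
  shows "reach_within G \<sigma> \<tau> X (Suc m) (loop_hist ls) s
    \<le> exit_value \<tau> X ls + (\<Sum>l\<in>loop_acts. act_prob ls l * reach_within G \<sigma> \<tau> X m (loop_hist (ls @ [l])) s)"
proof -
  let ?f = "\<lambda>a. act_prob ls a * (\<Sum>s'\<in>S. pmf (trans G s a) s' * reach_within G \<sigma> \<tau> X m (exit_hist ls a) s')"
  have "reach_within G \<sigma> \<tau> X (Suc m) (loop_hist ls) s = (\<Sum>a\<in>avail G s. ?f a)"
    unfolding reach_within_Suc[OF \<sigma> \<tau> s_state] using assms(2) s_max
    by (simp add: move_def act_prob_def exit_hist_def)
  also have "\<dots> = (\<Sum>a\<in>loop_acts. ?f a) + (\<Sum>a\<in>exit_acts. ?f a)"
    using finite_loop_acts finite_exit_acts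
    by (subst sum.union_disjoint[symmetric]) (auto simp: exit_acts_def loop_acts_def intro: sum.cong)
  also have "(\<Sum>a\<in>loop_acts. ?f a)
      = (\<Sum>l\<in>loop_acts. act_prob ls l * reach_within G \<sigma> \<tau> X m (loop_hist (ls @ [l])) s)"
  proof (intro sum.cong refl)
    fix l assume "l \<in> loop_acts"
    then show "?f l = act_prob ls l * reach_within G \<sigma> \<tau> X m (loop_hist (ls @ [l])) s"
      unfolding trans_loop_act[OF \<open>l \<in> loop_acts\<close>] sum_pmf_return[OF finite_states s_state]
      by (simp add: exit_hist_def loop_hist_def)
  qed
  also have "(\<Sum>a\<in>exit_acts. ?f a) \<le> exit_value \<tau> X ls"
    unfolding exit_value_def reach_within_append[of _ _ _ _ _ "exit_hist ls _" "[]", simplified]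
    using \<sigma> \<tau>
    by (intro sum_mono mult_left_mono act_prob_nonneg)
      (auto intro!: mult_left_mono reach_within_le_prob_reach max_strategy_shift min_strategy_shift)
  finally show ?thesis by linarith
qed

lemma reach_within_le_exit_value_layers:
  assumes \<tau>: "min_strategy G \<tau>" and "s \<notin> X" and "k \<le> K"
  shows "reach_within G \<sigma> \<tau> X K [] s \<le> (\<Sum>j<k. \<Sum>ls\<in>loops j. loop_prob ls * exit_value \<tau> X ls)
     + (\<Sum>ls\<in>loops k. loop_prob ls * reach_within G \<sigma> \<tau> X (K - k) (loop_hist ls) s)"
  using assms(3)
proof (induction k)
  case 0
  then show ?case by (simp add: loops_0 loop_hist_def)
next
  case (Suc k)
  then have K: "K - k = Suc (K - Suc k)" by simp
  have "(\<Sum>ls\<in>loops k. loop_prob ls * reach_within G \<sigma> \<tau> X (K - k) (loop_hist ls) s)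
      \<le> (\<Sum>ls\<in>loops k. loop_prob ls * (exit_value \<tau> X ls + (\<Sum>l\<in>loop_acts.
           act_prob ls l * reach_within G \<sigma> \<tau> X (K - Suc k) (loop_hist (ls @ [l])) s)))"
    unfolding K by (intro sum_mono mult_left_mono reach_within_Suc_loop_hist[OF assms(1,2)] loop_prob_nonneg)
  also have "\<dots> = (\<Sum>ls\<in>loops k. loop_prob ls * exit_value \<tau> X ls)
      + (\<Sum>ls\<in>loops (Suc k). loop_prob ls * reach_within G \<sigma> \<tau> X (K - Suc k) (loop_hist ls) s)"
    unfolding sum_loops_Suc by (simp add: loop_prob_snoc algebra_simps sum.distrib sum_distrib_left)
  finally show ?case using Suc by simp
qed

lemma reach_within_le_exit_value:
  assumes "min_strategy G \<tau>" "s \<notin> X"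
  shows "reach_within G \<sigma> \<tau> X K [] s \<le> (\<Sum>j<K. \<Sum>ls\<in>loops j. loop_prob ls * exit_value \<tau> X ls)"
  using reach_within_le_exit_value_layers[OF assms order_refl, of K] assms(2) by simp

end

context loop_decomposition
begin

definition is_loop_step :: "'s \<times> 'a \<Rightarrow> bool" where
  "is_loop_step = (\<lambda>(t, a). t = s \<and> a \<in> loop_acts)"

definition exit_response :: "('a list \<Rightarrow> 'a \<Rightarrow> 's \<Rightarrow> ('s, 'a) strategy) \<Rightarrow> ('s, 'a) strategy" where
  "exit_response \<tau>s h t = (case dropWhile is_loop_step h of
      [] \<Rightarrow> default_strategy h t
    | (_, b) # h' \<Rightarrow> \<tau>s (map snd (takeWhile is_loop_step h)) b (first_state h' t) h' t)"

lemma min_strategy_exit_response: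
  assumes "\<And>ls b s'. min_strategy G (\<tau>s ls b s')"
  shows "min_strategy G (exit_response \<tau>s)"
  using assms min_strategy_default unfolding min_strategy_def exit_response_def
  by (auto split: list.split)

lemma exit_response_exit_hist:
  assumes "set ls \<subseteq> loop_acts" "b \<notin> loop_acts"
  shows "exit_response \<tau>s (exit_hist ls b @ h) t = \<tau>s ls b (first_state h t) h t"
proof -
  have "\<forall>x\<in>set (loop_hist ls). is_loop_step x" "\<not> is_loop_step (s, b)"
    using assms unfolding loop_hist_def is_loop_step_def by auto
  then have "dropWhile is_loop_step (exit_hist ls b @ h) = (s, b) # h"
    "takeWhile is_loop_step (exit_hist ls b @ h) = loop_hist ls"
    unfolding exit_hist_def by (simp_all add: dropWhile_append2 takeWhile_append2)
  moreover have "map snd (loop_hist ls) = ls"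
    unfolding loop_hist_def by (induction ls) auto
  ultimately show ?thesis unfolding exit_response_def by simp
qed

lemma prob_reach_exit_response:
  assumes "set ls \<subseteq> loop_acts" "b \<notin> loop_acts"
  shows "prob_reach G (shift_strategy (exit_hist ls b) \<sigma>) (shift_strategy (exit_hist ls b) (exit_response \<tau>s)) X s'
       = prob_reach G (shift_strategy (exit_hist ls b) \<sigma>) (\<tau>s ls b s') X s'"
  unfolding prob_reach_def
  by (subst reach_within_cong_first_state[where u=s'])
    (auto simp: shift_strategy_def exit_response_exit_hist[OF assms] first_state_def)

definition exit_guarantee :: "('n \<Rightarrow> 's set) \<Rightarrow> 'a list \<Rightarrow> 'a \<Rightarrow> 's \<Rightarrow> real ^ 'n" where
  "exit_guarantee T ls b s' =
     (\<chi> i. INF \<tau>\<in>{\<tau>. min_strategy G \<tau>}. prob_reach G (shift_strategy (exit_hist ls b) \<sigma>) \<tau> (T i) s')"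

context
  fixes T :: "'n::finite \<Rightarrow> 's set" and ls :: "'a list" and b :: 'a and s' :: 's
  assumes s': "s' \<in> S"
begin

lemma bdd_below_prob_reach_shift:
  "bdd_below ((\<lambda>\<tau>. prob_reach G (shift_strategy (exit_hist ls b) \<sigma>) \<tau> X s') ` {\<tau>. min_strategy G \<tau>})"
  using prob_reach_bounds[OF max_strategy_shift[OF \<sigma>] _ s'] by (auto intro!: bdd_belowI[where m=0])

lemma exit_guarantee_le_prob_reach:
  "min_strategy G \<tau> \<Longrightarrow> exit_guarantee T ls b s' $ i \<le> prob_reach G (shift_strategy (exit_hist ls b) \<sigma>) \<tau> (T i) s'"
  unfolding exit_guarantee_def by (auto intro!: cINF_lower bdd_below_prob_reach_shift)

lemma exit_guarantee_nonneg: "0 \<le> exit_guarantee T ls b s' $ i"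
  unfolding exit_guarantee_def using min_strategy_default prob_reach_bounds[OF max_strategy_shift[OF \<sigma>] _ s']
  by (auto intro!: cINF_greatest)

lemma exit_guarantee_achievable: "exit_guarantee T ls b s' \<in> achievable G T s'"
  using exit_guarantee_nonneg exit_guarantee_le_prob_reach
  by (intro achievableI[OF _ max_strategy_shift[OF \<sigma>]]) (auto simp: nonneg_vec_def)

lemma exit_guarantee_le_1: "exit_guarantee T ls b s' $ i \<le> 1"
  using achievable_bounds[OF s' exit_guarantee_achievable] by blast

lemma exit_guarantee_approx:
  assumes "0 < \<epsilon>"
  obtains \<tau> where "min_strategy G \<tau>"
    "prob_reach G (shift_strategy (exit_hist ls b) \<sigma>) \<tau> (T i) s' < exit_guarantee T ls b s' $ i + \<epsilon>"
proof -
  have "(INF \<tau>\<in>{\<tau>. min_strategy G \<tau>}. prob_reach G (shift_strategy (exit_hist ls b) \<sigma>) \<tau> (T i) s')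
      < exit_guarantee T ls b s' $ i + \<epsilon>"
    using assms unfolding exit_guarantee_def by simp
  then show ?thesis
    using that min_strategy_default by (subst (asm) cINF_less_iff) (auto intro: bdd_below_prob_reach_shift)
qed

end

definition layer_guarantee :: "('n \<Rightarrow> 's set) \<Rightarrow> 'a list \<Rightarrow> real ^ 'n" where
  "layer_guarantee T ls =
     (\<Sum>b\<in>exit_acts. act_prob ls b *\<^sub>R (\<Sum>s'\<in>S. pmf (trans G s b) s' *\<^sub>R exit_guarantee T ls b s'))"

definition guarantee_upto :: "('n \<Rightarrow> 's set) \<Rightarrow> nat \<Rightarrow> real ^ 'n" where
  "guarantee_upto T K = (\<Sum>j<K. \<Sum>ls\<in>loops j. loop_prob ls *\<^sub>R layer_guarantee T ls)"

definition guarantee :: "('n \<Rightarrow> 's set) \<Rightarrow> real ^ 'n" where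
  "guarantee T = (\<chi> i. SUP K. guarantee_upto T K $ i)"

lemma layer_guarantee_bounds: "0 \<le> layer_guarantee T ls $ i \<and> layer_guarantee T ls $ i \<le> exit_prob ls"
proof -
  have "(\<Sum>s'\<in>S. pmf (trans G s b) s' * exit_guarantee T ls b s' $ i) \<le> 1" if "b \<in> exit_acts" for b
  proof -
    have "(\<Sum>s'\<in>S. pmf (trans G s b) s' * exit_guarantee T ls b s' $ i) \<le> (\<Sum>s'\<in>S. pmf (trans G s b) s')"
      by (intro sum_mono mult_left_le exit_guarantee_le_1) auto
    then show ?thesis using sum_pmf_trans[OF s_state exit_act_avail[OF that]] by simp
  qed
  then show ?thesis
    unfolding layer_guarantee_def exit_prob_def
    by (auto intro!: sum_mono sum_nonneg mult_left_le mult_nonneg_nonneg act_prob_nonneg exit_guarantee_nonneg)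
qed

lemma guarantee_upto_le_1: "guarantee_upto T K $ i \<le> 1"
proof -
  have "guarantee_upto T K $ i \<le> (\<Sum>j<K. \<Sum>ls\<in>loops j. loop_prob ls * exit_prob ls)"
    unfolding guarantee_upto_def using layer_guarantee_bounds loop_prob_nonneg
    by (auto intro!: sum_mono mult_left_mono)
  then show ?thesis using exit_mass_le_1[of K] by linarith
qed

lemma guarantee_upto_tendsto: "guarantee_upto T \<longlonglongrightarrow> guarantee T"
proof (rule vec_tendstoI)
  fix i
  have "incseq (\<lambda>K. guarantee_upto T K $ i)"
    unfolding incseq_Suc_iff guarantee_upto_def
    by (auto intro!: sum_nonneg mult_nonneg_nonneg loop_prob_nonneg layer_guarantee_bounds[THEN conjunct1])
  then show "(\<lambda>K. guarantee_upto T K $ i) \<longlonglongrightarrow> guarantee T $ i"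
    unfolding guarantee_def using guarantee_upto_le_1
    by (auto intro!: LIMSEQ_incseq_SUP bdd_aboveI[where M=1])
qed

lemma guarantee_upto_le_guarantee: "guarantee_upto T K $ i \<le> guarantee T $ i"
  unfolding guarantee_def using guarantee_upto_le_1 by (auto intro!: cSUP_upper bdd_aboveI[where M=1])

lemma exists_near_optimal_responses:
  assumes "0 < \<epsilon>"
  shows "\<exists>\<tau>s. \<forall>ls b s'. min_strategy G (\<tau>s ls b s') \<and> (s' \<in> S \<longrightarrow>
      prob_reach G (shift_strategy (exit_hist ls b) \<sigma>) (\<tau>s ls b s') (T i) s' < exit_guarantee T ls b s' $ i + \<epsilon>)"
proof -
  have "\<exists>\<tau>. min_strategy G \<tau> \<and> (s' \<in> S \<longrightarrow>
      prob_reach G (shift_strategy (exit_hist ls b) \<sigma>) \<tau> (T i) s' < exit_guarantee T ls b s' $ i + \<epsilon>)"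
    for ls b s'
  proof (cases "s' \<in> S")
    case True
    then show ?thesis by (meson exit_guarantee_approx[OF True assms])
  qed (use min_strategy_default in auto)
  then show ?thesis by (intro choice allI)
qed

lemma exists_exit_response:
  assumes "0 < \<epsilon>"
  shows "\<exists>\<tau>. min_strategy G \<tau> \<and>
    (\<forall>j ls. ls \<in> loops j \<longrightarrow> exit_value \<tau> (T i) ls \<le> layer_guarantee T ls $ i + \<epsilon> * exit_prob ls)"
proof -
  obtain \<tau>s where \<tau>s: "\<And>ls b s'. min_strategy G (\<tau>s ls b s')"
    "\<And>ls b s'. s' \<in> S \<Longrightarrow> prob_reach G (shift_strategy (exit_hist ls b) \<sigma>) (\<tau>s ls b s') (T i) s'
        < exit_guarantee T ls b s' $ i + \<epsilon>"
    using exists_near_optimal_responses[OF assms, where T=T and i=i] by blast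
  have "exit_value (exit_response \<tau>s) (T i) ls \<le> layer_guarantee T ls $ i + \<epsilon> * exit_prob ls"
    if "ls \<in> loops j" for j ls
  proof -
    have "set ls \<subseteq> loop_acts" using that unfolding loops_def by simp
    then have "exit_value (exit_response \<tau>s) (T i) ls
        \<le> (\<Sum>b\<in>exit_acts. act_prob ls b * (\<Sum>s'\<in>S. pmf (trans G s b) s' * (exit_guarantee T ls b s' $ i + \<epsilon>)))"
      unfolding exit_value_def using \<tau>s(2)
      by (intro sum_mono mult_left_mono act_prob_nonneg)
        (auto simp: prob_reach_exit_response exit_act_not_loop intro!: mult_left_mono less_imp_le)
    also have "\<dots> = (\<Sum>b\<in>exit_acts. act_prob ls b * (\<Sum>s'\<in>S. pmf (trans G s b) s' * exit_guarantee T ls b s' $ i)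
        + \<epsilon> * act_prob ls b)"
    proof (intro sum.cong refl)
      fix b assume "b \<in> exit_acts"
      then have "(\<Sum>s'\<in>S. pmf (trans G s b) s' * \<epsilon>) = \<epsilon>"
        using sum_pmf_trans[OF s_state exit_act_avail] by (simp flip: sum_distrib_right)
      then show "act_prob ls b * (\<Sum>s'\<in>S. pmf (trans G s b) s' * (exit_guarantee T ls b s' $ i + \<epsilon>))
          = act_prob ls b * (\<Sum>s'\<in>S. pmf (trans G s b) s' * exit_guarantee T ls b s' $ i) + \<epsilon> * act_prob ls b"
        by (simp add: distrib_left sum.distrib)
    qed
    also have "\<dots> = layer_guarantee T ls $ i + \<epsilon> * exit_prob ls"
      by (simp add: layer_guarantee_def exit_prob_def sum.distrib sum_distrib_left)
    finally show ?thesis .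
  qed
  then show ?thesis
    using min_strategy_exit_response[OF \<tau>s(1)] by (intro exI[of _ "exit_response \<tau>s"]) auto
qed

lemma value_le_guarantee:
  assumes v: "\<And>\<tau>. min_strategy G \<tau> \<Longrightarrow> v \<le> prob_reach G \<sigma> \<tau> (T i) s" and "s \<notin> T i"
  shows "v \<le> guarantee T $ i"
proof (rule field_le_epsilon)
  fix \<epsilon> :: real assume "0 < \<epsilon>"
  then obtain \<tau> where \<tau>: "min_strategy G \<tau>"
    and exit_value: "\<And>j ls. ls \<in> loops j \<Longrightarrow> exit_value \<tau> (T i) ls \<le> layer_guarantee T ls $ i + \<epsilon> * exit_prob ls"
    using exists_exit_response[of \<epsilon> T i] by blast
  have "reach_within G \<sigma> \<tau> (T i) K [] s \<le> guarantee T $ i + \<epsilon>" for K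
  proof -
    have "reach_within G \<sigma> \<tau> (T i) K [] s \<le> (\<Sum>j<K. \<Sum>ls\<in>loops j. loop_prob ls * exit_value \<tau> (T i) ls)"
      by (rule reach_within_le_exit_value[OF \<tau> assms(2)])
    also have "\<dots> \<le> (\<Sum>j<K. \<Sum>ls\<in>loops j. loop_prob ls * (layer_guarantee T ls $ i + \<epsilon> * exit_prob ls))"
      using exit_value loop_prob_nonneg by (intro sum_mono mult_left_mono) auto
    also have "\<dots> = guarantee_upto T K $ i + \<epsilon> * (\<Sum>j<K. \<Sum>ls\<in>loops j. loop_prob ls * exit_prob ls)"
      by (simp add: guarantee_upto_def distrib_left sum.distrib sum_distrib_left mult_ac)
    also have "\<dots> \<le> guarantee T $ i + \<epsilon>"
      using guarantee_upto_le_guarantee[of T K i] mult_left_le[OF exit_mass_le_1[of K], of \<epsilon>] \<open>0 < \<epsilon>\<close>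
      by linarith
    finally show ?thesis .
  qed
  then have "prob_reach G \<sigma> \<tau> (T i) s \<le> guarantee T $ i + \<epsilon>"
    unfolding prob_reach_def by (auto intro!: cSUP_least)
  then show "v \<le> guarantee T $ i + \<epsilon>" using v[OF \<tau>] by linarith
qed

end

context loop_decomposition
begin

lemma max_exits_eq: "{(t, a) \<in> exits G {s}. t \<in> max_states G} = Pair s ` exit_acts"
proof -
  have "(\<exists>s'. 0 < pmf (trans G s a) s' \<and> s' \<noteq> s) \<longleftrightarrow> a \<notin> loop_acts" if "a \<in> avail G s" for a
    using that unfolding loop_acts_def by (auto simp: pmf_positive_iff)
  then show ?thesis
    using s_max unfolding exits_def exit_acts_def by auto
qed

lemma exit_candidates_eq:
  "exit_candidates G T f {s} = (if exit_acts = {} then {0} else (\<Union>b\<in>exit_acts. act_set G T f s b))"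
  unfolding exit_candidates_def max_exits_eq by auto

lemma scaled_exit_point_mem_act_set:
  assumes \<rho>: "\<And>i. 0 \<le> \<rho> $ i \<and> \<rho> $ i \<le> 1" and b: "b \<in> exit_acts"
  shows "(\<Sum>s'\<in>S. pmf (trans G s b) s' *\<^sub>R (\<rho> * exit_guarantee T ls b s')) \<in> act_set G T (achievable G T) s b"
proof -
  let ?y = "\<Sum>s'\<in>S. pmf (trans G s b) s' *\<^sub>R (\<rho> * exit_guarantee T ls b s')"
  have bounds: "0 \<le> \<rho> $ i * exit_guarantee T ls b s' $ i \<and> \<rho> $ i * exit_guarantee T ls b s' $ i \<le> 1"
    if "s' \<in> S" for s' i
    using \<rho>[of i] exit_guarantee_nonneg[OF that] exit_guarantee_le_1[OF that]
    by (auto intro!: mult_le_one mult_nonneg_nonneg)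
  have "\<rho> * exit_guarantee T ls b s' \<in> achievable G T s'" if "s' \<in> S" for s'
  proof (rule achievable_downward_closed[OF exit_guarantee_achievable[OF that, where T=T and ls=ls and b=b]])
    fix i
    have "0 \<le> exit_guarantee T ls b s' $ i" by (rule exit_guarantee_nonneg[OF that])
    then show "0 \<le> (\<rho> * exit_guarantee T ls b s') $ i"
      "(\<rho> * exit_guarantee T ls b s') $ i \<le> exit_guarantee T ls b s' $ i"
      using \<rho>[of i] by (auto intro: mult_left_le_one_le)
  qed
  then have "?y \<in> msum_over (\<lambda>s'. sscale (pmf (trans G s b) s') (achievable G T s')) S"
    unfolding msum_over_eq[OF finite_states] sscale_def by blast
  moreover have "?y \<in> unit_box"
    unfolding mem_unit_box_iff
  proof
    fix i
    have "?y $ i \<le> (\<Sum>s'\<in>S. pmf (trans G s b) s')"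
      using bounds by (auto intro!: sum_mono mult_left_le)
    then show "0 \<le> ?y $ i \<and> ?y $ i \<le> 1"
      using bounds sum_pmf_trans[OF s_state exit_act_avail[OF b]] by (auto intro!: sum_nonneg)
  qed
  moreover have "0 \<in> dwc {ind_vec T s}"
    by (rule zero_mem_dwc_singleton) (simp add: nonneg_vec_def ind_vec_def)
  ultimately show ?thesis unfolding act_set_def msum_def by force
qed

definition exit_mass :: real where
  "exit_mass = (SUP K. \<Sum>j<K. \<Sum>ls\<in>loops j. loop_prob ls * exit_prob ls)"

lemma exit_mass_tendsto: "(\<lambda>K. \<Sum>j<K. \<Sum>ls\<in>loops j. loop_prob ls * exit_prob ls) \<longlonglongrightarrow> exit_mass"
  and exit_mass_le: "exit_mass \<le> 1"
proof -
  have "incseq (\<lambda>K. \<Sum>j<K. \<Sum>ls\<in>loops j. loop_prob ls * exit_prob ls)"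
    unfolding incseq_Suc_iff by (auto intro!: sum_nonneg mult_nonneg_nonneg loop_prob_nonneg exit_prob_nonneg)
  then show "(\<lambda>K. \<Sum>j<K. \<Sum>ls\<in>loops j. loop_prob ls * exit_prob ls) \<longlonglongrightarrow> exit_mass"
    unfolding exit_mass_def using exit_mass_le_1 by (auto intro!: LIMSEQ_incseq_SUP bdd_aboveI[where M=1])
  show "exit_mass \<le> 1"
    unfolding exit_mass_def using exit_mass_le_1 by (auto intro!: cSUP_least)
qed

text \<open>The exits taken within the first \<open>K\<close> loop iterations, plus the event \<^const>\<open>None\<close> of
  looping forever.\<close>

definition exit_events :: "nat \<Rightarrow> (nat \<times> 'a list \<times> 'a) option set" where
  "exit_events K = insert None (Some ` (SIGMA j:{..<K}. loops j \<times> exit_acts))"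

lemma finite_exit_events: "finite (exit_events K)"
  unfolding exit_events_def using finite_loops finite_exit_acts by auto

lemma mono_exit_events: "mono exit_events"
  unfolding mono_def exit_events_def by auto

lemma sum_exit_events:
  fixes f :: "(nat \<times> 'a list \<times> 'a) option \<Rightarrow> 'v::comm_monoid_add"
  shows "(\<Sum>x\<in>exit_events K. f x) = f None + (\<Sum>j<K. \<Sum>ls\<in>loops j. \<Sum>b\<in>exit_acts. f (Some (j, ls, b)))"
proof -
  have fin: "finite (SIGMA j:{..<K}. loops j \<times> exit_acts)"
    using finite_loops finite_exit_acts by auto
  then have "(\<Sum>x\<in>exit_events K. f x) = f None + (\<Sum>x\<in>(SIGMA j:{..<K}. loops j \<times> exit_acts). f (Some x))"
    unfolding exit_events_def by (simp add: sum.reindex)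
  also have "(\<Sum>x\<in>(SIGMA j:{..<K}. loops j \<times> exit_acts). f (Some x))
      = (\<Sum>j<K. \<Sum>x\<in>loops j \<times> exit_acts. f (Some (j, x)))"
    using finite_loops finite_exit_acts by (subst sum.Sigma) (auto simp: split_def)
  also have "\<dots> = (\<Sum>j<K. \<Sum>ls\<in>loops j. \<Sum>b\<in>exit_acts. f (Some (j, ls, b)))"
    by (simp add: sum.cartesian_product)
  finally show ?thesis .
qed

lemma scaled_guarantee_mem_hull:
  fixes T :: "'n::finite \<Rightarrow> 's set"
  assumes \<rho>: "\<And>i. 0 \<le> \<rho> $ i \<and> \<rho> $ i \<le> 1"
  shows "\<rho> * guarantee T \<in> convex hull exit_candidates G T (achievable G T) {s}"
proof -
  let ?Y = "exit_candidates G T (achievable G T) {s}"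
  define y where "y ls b = (\<Sum>s'\<in>S. pmf (trans G s b) s' *\<^sub>R (\<rho> * exit_guarantee T ls b s'))" for ls b
  have y_mem: "y ls b \<in> ?Y" if "b \<in> exit_acts" for ls b
    using scaled_exit_point_mem_act_set[OF \<rho> that] that unfolding exit_candidates_eq y_def by auto
  have "0 \<in> ?Y"
  proof (cases "exit_acts = {}")
    case False
    then obtain b where "b \<in> exit_acts" by auto
    then show ?thesis
      using scaled_exit_point_mem_act_set[of 0 b T "[]"] False unfolding exit_candidates_eq by auto
  qed (simp add: exit_candidates_eq)
  define q :: "(nat \<times> 'a list \<times> 'a) option \<Rightarrow> real" where "q x = (case x of None \<Rightarrow> 1 - exit_mass | Some (j, ls, b) \<Rightarrow> loop_prob ls * act_prob ls b)" for x
  define c :: "(nat \<times> 'a list \<times> 'a) option \<Rightarrow> real ^ 'n" where "c x = (case x of None \<Rightarrow> 0 | Some (j, ls, b) \<Rightarrow> if b \<in> exit_acts then y ls b else 0)" for x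
  show ?thesis
  proof (rule countable_convex_combination_mem[OF convex_convex_hull finite_exit_events mono_exit_events])
    show "0 \<le> q x" for x
      unfolding q_def using exit_mass_le
      by (auto split: option.split intro!: mult_nonneg_nonneg loop_prob_nonneg act_prob_nonneg)
    show "c x \<in> convex hull ?Y" for x
      unfolding c_def using \<open>0 \<in> ?Y\<close> y_mem by (auto split: option.split intro: hull_inc)
    have "(\<Sum>x\<in>exit_events K. q x) = 1 - exit_mass + (\<Sum>j<K. \<Sum>ls\<in>loops j. loop_prob ls * exit_prob ls)" for K
      unfolding sum_exit_events q_def exit_prob_def by (simp add: sum_distrib_left)
    then show "(\<lambda>K. \<Sum>x\<in>exit_events K. q x) \<longlonglongrightarrow> 1"
      using tendsto_add[OF tendsto_const exit_mass_tendsto, of "1 - exit_mass"] by simp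
    have partial: "(\<Sum>x\<in>exit_events K. q x *\<^sub>R c x) = \<rho> * guarantee_upto T K" for K
      unfolding sum_exit_events q_def c_def y_def guarantee_upto_def layer_guarantee_def
      by (simp add: vec_eq_iff sum_distrib_left mult_ac)
    show "(\<lambda>K. \<Sum>x\<in>exit_events K. q x *\<^sub>R c x) \<longlonglongrightarrow> \<rho> * guarantee T"
      unfolding partial
      by (intro vec_tendstoI) (simp add: tendsto_mult_left tendsto_vec_nth[OF guarantee_upto_tendsto])
  qed
qed

lemma guaranteed_mem_best_exit:
  assumes v: "\<And>\<tau> i. min_strategy G \<tau> \<Longrightarrow> v $ i \<le> prob_reach G \<sigma> \<tau> (T i) s" and "nonneg_vec v"
  shows "v \<in> best_exit G T (achievable G T) {s}"
proof -
  have "v \<in> achievable G T s" using assms(2) \<sigma> v by (rule achievableI)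
  then have v_bounds: "0 \<le> v $ i" "v $ i \<le> 1" for i
    using achievable_bounds[OF s_state] by auto
  have v_le: "v $ i \<le> guarantee T $ i" if "s \<notin> T i" for i
    using value_le_guarantee[where T=T and i=i, OF v that] .
  have "0 \<le> guarantee T $ i" for i
    using guarantee_upto_le_guarantee[of T 0 i] by (simp add: guarantee_upto_def)
  define \<rho> where "\<rho> = (\<chi> i. if s \<in> T i \<or> guarantee T $ i = 0 then 0 else v $ i / guarantee T $ i)"
  define d where "d = (\<chi> i. if s \<in> T i then v $ i else 0)"
  have \<rho>: "0 \<le> \<rho> $ i \<and> \<rho> $ i \<le> 1" for i
    using v_le[of i] v_bounds[of i] \<open>0 \<le> guarantee T $ i\<close>
    by (auto simp: \<rho>_def divide_le_eq_1)
  have "v $ i = d $ i + \<rho> $ i * guarantee T $ i" for i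
  proof (cases "s \<in> T i")
    case False
    then show ?thesis
      using v_le[OF False] v_bounds(1)[of i]
      by (cases "guarantee T $ i = 0") (auto simp: d_def \<rho>_def)
  qed (simp add: d_def \<rho>_def)
  then have "v = d + \<rho> * guarantee T" by (simp add: vec_eq_iff)
  moreover have "d \<in> dwc {ind_vec T s}"
    unfolding mem_dwc_ind_vec_iff d_def using v_bounds by auto
  moreover have "v \<in> unit_box"
    unfolding mem_unit_box_iff using v_bounds by auto
  ultimately show ?thesis
    unfolding best_exit_eq msum_def using scaled_guarantee_mem_hull[OF \<rho>] by auto
qed

end

theorem lemmaA1:
  fixes G :: "('s, 'a) sgame" and T :: "'n::finite \<Rightarrow> 's set" and s :: 's
  assumes "wf_game G"
    and "\<forall>i. T i \<subseteq> states G"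
    and "s \<in> max_states G"
  shows "best_exit G T (achievable G T) {s} = achievable G T s"
proof
  interpret game G by unfold_locales (rule assms(1))
  show "best_exit G T (achievable G T) {s} \<subseteq> achievable G T s"
    by (rule best_exit_subset_achievable[OF assms(3)])
  show "achievable G T s \<subseteq> best_exit G T (achievable G T) {s}"
  proof
    fix v assume "v \<in> achievable G T s"
    then obtain \<sigma> where v: "nonneg_vec v" "max_strategy G \<sigma>"
      "\<And>\<tau> i. min_strategy G \<tau> \<Longrightarrow> v $ i \<le> prob_reach G \<sigma> \<tau> (T i) s"
      unfolding achievable_def by auto
    interpret loop_decomposition G s \<sigma> by unfold_locales (fact assms(3) v(2))+
    show "v \<in> best_exit G T (achievable G T) {s}"
      using v(3,1) by (rule guaranteed_mem_best_exit)
  qed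
qed

end
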